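(* Let $H:\Sigma\to\mathbb R$ be continuous with summable variation. \begin{enumerate} \item For every $x\in\mathrm{Mather}(H)$, the function $h(x,\cdot)$ belongs to $\mathbb K$ and is a calibrated sub-action. \item If $V\in C^0(\Sigma)$ is a calibrated sub-action, then $V\in\mathbb K$ and $V(y)=\min\{V(x)+h(x,y): x\in\mathrm{Mather}(H)\}$ for all $y\in\Sigma$. \end{enumerate}
   Context: $\Sigma:=\{0,1\}^{\mathbb N}$, $\sigma$ the left shift; $x\stackrel{n}{=}y$ means $x_j=y_j$ for $0\le j\le n-1$; $\mathrm{var}(f,n):=\sup\{|f(x)-f(y)|:x\stackrel{n}{=}y\}$; summable variation: $\sum_n\mathrm{var}(H,n)<\infty$. $\mathbb K:=\{V\in C^0(\Sigma):\forall n\ge1,\ \mathrm{var}(V,n)\le\sum_{k\ge n+1}\mathrm{var}(H,k)\}$. A minimizing measure is a $\sigma$-invariant probability minimizing $\int H\,d\nu$ over $\sigma$-invariant probabilities; $\bar H$ is the minimal value; $\mathrm{Mather}(H)$ is the union of supports of minimizing measures. Lax–Oleinik operator $T[V](y):=\min\{V(x)+H(x):\sigma(x)=y\}$; calibrated sub-action: continuous $V$ with $T[V]=V+\bar H$. Peierls barrier: $h(x,y):=\lim_{p\to\infty}\lim_{n\to\infty}S_n^p(x,y)$, $S_n^p(x,y):=\inf\{\sum_{i=0}^{k-1}[H(\sigma^iz)-\bar H]:k\ge n,\ z\stackrel{p}{=}x,\ \sigma^k(z)\stackrel{p}{=}y\}$. *)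

theory Defs
  imports "HOL-Probability.Probability"
begin

text \<open>The full one-sided shift on two symbols: Sigma = {0,1}^N is represented by the type
  nat \<Rightarrow> bool with the product topology (bool carries the discrete topology),
  i.e. the usual compact metrizable Cantor topology.\<close>

type_synonym sigma = "nat \<Rightarrow> bool"

definition shift :: "sigma \<Rightarrow> sigma" where
  "shift x = (\<lambda>j. x (Suc j))"

definition agree :: "nat \<Rightarrow> sigma \<Rightarrow> sigma \<Rightarrow> bool" where
  "agree n x y \<longleftrightarrow> (\<forall>j<n. x j = y j)"

definition var :: "(sigma \<Rightarrow> real) \<Rightarrow> nat \<Rightarrow> real" where
  "var f n = (SUP (x, y) \<in> {(x, y). agree n x y}. \<bar>f x - f y\<bar>)"

definition summable_variation :: "(sigma \<Rightarrow> real) \<Rightarrow> bool" where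
  "summable_variation H \<longleftrightarrow> summable (\<lambda>n. var H n)"

definition classK :: "(sigma \<Rightarrow> real) \<Rightarrow> (sigma \<Rightarrow> real) set" where
  "classK H = {V. continuous_on UNIV V \<and>
      (\<forall>n\<ge>1. var V n \<le> (\<Sum>k. var H (k + n + 1)))}"

definition invariant_prob :: "sigma measure \<Rightarrow> bool" where
  "invariant_prob M \<longleftrightarrow> prob_space M \<and> sets M = sets (borel :: sigma measure) \<and>
      shift \<in> M \<rightarrow>\<^sub>M M \<and> distr M M shift = M"

definition Hbar :: "(sigma \<Rightarrow> real) \<Rightarrow> real" where
  "Hbar H = (INF M \<in> {M. invariant_prob M}. integral\<^sup>L M H)"

definition minimizing :: "(sigma \<Rightarrow> real) \<Rightarrow> sigma measure \<Rightarrow> bool" where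
  "minimizing H M \<longleftrightarrow> invariant_prob M \<and>
      (\<forall>N. invariant_prob N \<longrightarrow> integral\<^sup>L M H \<le> integral\<^sup>L N H)"

definition support :: "sigma measure \<Rightarrow> sigma set" where
  "support M = {x. \<forall>U. open U \<and> x \<in> U \<longrightarrow> emeasure M U > 0}"

definition Mather :: "(sigma \<Rightarrow> real) \<Rightarrow> sigma set" where
  "Mather H = (\<Union>M \<in> {M. minimizing H M}. support M)"

definition LaxOleinik :: "(sigma \<Rightarrow> real) \<Rightarrow> (sigma \<Rightarrow> real) \<Rightarrow> sigma \<Rightarrow> real" where
  "LaxOleinik H V y = Min {V x + H x | x. shift x = y}"

definition calibrated_subaction :: "(sigma \<Rightarrow> real) \<Rightarrow> (sigma \<Rightarrow> real) \<Rightarrow> bool" where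
  "calibrated_subaction H V \<longleftrightarrow> continuous_on UNIV V \<and>
      (\<forall>y. LaxOleinik H V y = V y + Hbar H)"

definition S_np :: "(sigma \<Rightarrow> real) \<Rightarrow> nat \<Rightarrow> nat \<Rightarrow> sigma \<Rightarrow> sigma \<Rightarrow> real" where
  "S_np H n p x y = Inf {(\<Sum>i<k. H ((shift ^^ i) z) - Hbar H) | k z.
      k \<ge> n \<and> agree p z x \<and> agree p ((shift ^^ k) z) y}"

definition peierls :: "(sigma \<Rightarrow> real) \<Rightarrow> sigma \<Rightarrow> sigma \<Rightarrow> real" where
  "peierls H x y = lim (\<lambda>p. lim (\<lambda>n. S_np H n p x y))"

end

theory Submission
  imports Defs
begin

text \<open>
  Everything rests on bounded distortion: normalized Birkhoff sums
  S_k z = (\<Sum>i<k. H (shift^i z) - Hbar H) along two orbit segments whose first k + m symbols agree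
  differ by at most \<Sum>j>m. var H j. Comparing with periodic orbits, whose orbit measures are
  invariant, bounds S_k from below, so the infimum of S_k over all orbit segments ending at a point
  is a continuous sub-action. Its defect integrates to zero against a minimizing measure and hence
  vanishes on the Mather set, which makes S_k bounded above along Mather orbits. For such x the
  approximations S_n^p(x,y) of the Peierls barrier increase in n and p, and their limit h(x,.)
  inherits from them the modulus of continuity of the class K and the one-step relations that make
  it a calibrated sub-action.

  For a calibrated sub-action V, every orbit segment from near x to near y shows
  V y \<le> V x + h(x,y), and following a calibrating backward orbit of y gives the modulus of
  continuity. Weak limits of the empirical measures along that backward orbit are invariant and,
  since the calibration defect vanishes along the orbit, minimizing; the orbit returns arbitrarily
  close to every point x of their support, which yields V x + h(x,y) \<le> V y.
\<close>

section \<open>The shift space\<close>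

lemma funpow_shift: "(shift ^^ i) z = (\<lambda>j. z (j + i))"
  by (induction i arbitrary: z) (auto simp: shift_def)

lemma funpow_shift_Suc: "(shift ^^ Suc i) z = (shift ^^ i) (shift z)"
  by (simp only: funpow_Suc_right comp_def)

lemma agree_refl [simp]: "agree n x x"
  by (auto simp: agree_def)

lemma agree_sym: "agree n x y \<Longrightarrow> agree n y x"
  by (auto simp: agree_def)

lemma agree_trans: "agree n x y \<Longrightarrow> agree n y z \<Longrightarrow> agree n x z"
  by (auto simp: agree_def)

lemma agree_mono: "agree n x y \<Longrightarrow> m \<le> n \<Longrightarrow> agree m x y"
  by (auto simp: agree_def)

lemma agree_shift: "agree (Suc p) x y \<Longrightarrow> agree p (shift x) (shift y)"
  by (auto simp: agree_def shift_def)

lemma agree_funpow_shift: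
  "agree (k + m) z z' \<Longrightarrow> i \<le> k \<Longrightarrow> agree (k - i + m) ((shift ^^ i) z) ((shift ^^ i) z')"
  by (auto simp: agree_def funpow_shift)

definition splice :: "nat \<Rightarrow> sigma \<Rightarrow> sigma \<Rightarrow> sigma" where
  "splice k z y = (\<lambda>j. if j < k then z j else y (j - k))"

lemma funpow_shift_splice [simp]: "(shift ^^ k) (splice k z y) = y"
  by (auto simp: funpow_shift splice_def)

lemma agree_splice: "p \<le> k \<Longrightarrow> agree p (splice k z y) z"
  by (auto simp: agree_def splice_def)

lemma agree_splice_if_agree_funpow_shift:
  assumes "agree m ((shift ^^ k) z) y"
  shows "agree (k + m) z (splice k z y)"
  unfolding agree_def splice_def
proof (intro allI impI)
  fix j assume j: "j < k + m"
  show "z j = (if j < k then z j else y (j - k))"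
  proof (cases "j < k")
    case False
    then have "j - k < m" "j - k + k = j" using j by auto
    then show ?thesis using assms False by (metis agree_def funpow_shift)
  qed simp
qed

definition prepend :: "bool \<Rightarrow> sigma \<Rightarrow> sigma" where
  "prepend b y = (\<lambda>j. case j of 0 \<Rightarrow> b | Suc i \<Rightarrow> y i)"

lemma shift_prepend [simp]: "shift (prepend b y) = y"
  by (simp add: shift_def prepend_def)

lemma prepend_shift: "prepend (z 0) (shift z) = z"
  by (rule ext) (simp add: shift_def prepend_def split: nat.split)

lemma LaxOleinik_eq_min:
  "LaxOleinik H V y =
     min (V (prepend False y) + H (prepend False y)) (V (prepend True y) + H (prepend True y))"
proof -
  have "{x. shift x = y} = {prepend False y, prepend True y}"
  proof (intro equalityI subsetI)
    fix x assume "x \<in> {x. shift x = y}"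
    then have "x = prepend (x 0) y" using prepend_shift[of x] by simp
    then show "x \<in> {prepend False y, prepend True y}" by (cases "x 0") auto
  qed auto
  moreover have "{V x + H x | x. shift x = y} = (\<lambda>x. V x + H x) ` {x. shift x = y}"
    by blast
  ultimately show ?thesis by (simp add: LaxOleinik_def)
qed

definition cylinder :: "nat \<Rightarrow> sigma \<Rightarrow> sigma set" where
  "cylinder n x = {z. agree n z x}"

lemma mem_cylinder [simp]: "z \<in> cylinder n x \<longleftrightarrow> agree n z x"
  by (simp add: cylinder_def)

lemma open_cylinder: "open (cylinder n x)"
proof -
  have "cylinder n x = Pi\<^sub>E UNIV (\<lambda>j. if j < n then {x j} else UNIV)"
    by (auto simp: agree_def PiE_UNIV_domain Pi_def split: if_splits)
  moreover have "open (Pi\<^sub>E UNIV (\<lambda>j. if j < n then {x j} else (UNIV :: bool set)))"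
  proof (rule open_PiE)
    show "finite {j. (if j < n then {x j} else UNIV) \<noteq> UNIV}"
      by (rule finite_subset[of _ "{..<n}"]) auto
  qed (simp add: discrete_topology_class.open_discrete)
  ultimately show ?thesis by simp
qed

lemma open_contains_cylinder:
  assumes "open U" "x \<in> U"
  obtains n where "cylinder n x \<subseteq> U"
proof -
  obtain X where X: "x \<in> (\<Pi>\<^sub>E i\<in>UNIV. X i)"
      "finite {i. X i \<noteq> topspace (euclidean :: bool topology)}" "(\<Pi>\<^sub>E i\<in>UNIV. X i) \<subseteq> U"
    using product_topology_open_contains_basis[of "\<lambda>i. euclidean" UNIV U x] assms
    unfolding open_fun_def by blast
  obtain n where n: "{i. X i \<noteq> UNIV} \<subseteq> {..<n}"
    using X(2) finite_nat_bounded by auto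
  have "z i \<in> X i" if "agree n z x" for z i
  proof (cases "X i = UNIV")
    case False
    then have "i < n" using n by auto
    then show ?thesis using that X(1) by (auto simp: agree_def PiE_UNIV_domain)
  qed simp
  then have "cylinder n x \<subseteq> (\<Pi>\<^sub>E i\<in>UNIV. X i)"
    by (auto simp: PiE_UNIV_domain)
  then have "cylinder n x \<subseteq> U" using X(3) by (rule order.trans)
  then show thesis by (rule that)
qed

lemma compact_UNIV_sigma: "compact (UNIV :: sigma set)"
proof -
  have "compact_space (product_topology (\<lambda>i::nat. euclidean :: bool topology) UNIV)"
    unfolding compact_space_product_topology
    by (auto simp: compact_space_def finite_imp_compact)
  then show ?thesis
    by (simp add: euclidean_product_topology compact_space_def)
qed

lemma continuous_on_shift: "continuous_on UNIV shift"
  unfolding shift_def by (intro continuous_intros continuous_on_product_coordinates)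

lemma continuous_on_compose_shift:
  "continuous_on UNIV f \<Longrightarrow> continuous_on UNIV (\<lambda>x. f (shift x))"
  using continuous_on_compose2[OF _ continuous_on_shift] by blast

lemma open_vimage_if_continuous_on_UNIV: "continuous_on UNIV f \<Longrightarrow> open S \<Longrightarrow> open (f -` S)"
  using continuous_on_open_vimage[of UNIV f] by auto

lemma bounded_range_continuous_on_sigma:
  "continuous_on UNIV (f :: sigma \<Rightarrow> 'a::metric_space) \<Longrightarrow> bounded (range f)"
  by (rule compact_imp_bounded[OF compact_continuous_image[OF _ compact_UNIV_sigma]])

lemma continuous_on_sigma_bounded:
  fixes f :: "sigma \<Rightarrow> real"
  assumes "continuous_on UNIV f"
  obtains B where "\<And>x. \<bar>f x\<bar> \<le> B"
  using bounded_range_continuous_on_sigma[OF assms] that by (auto simp: bounded_iff)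

lemma continuous_on_sigma_uniformly:
  fixes f :: "sigma \<Rightarrow> real"
  assumes f: "continuous_on UNIV f" and e: "e > 0"
  obtains N where "\<And>n x y. N \<le> n \<Longrightarrow> agree n x y \<Longrightarrow> \<bar>f x - f y\<bar> < e"
proof -
  have "\<exists>n. \<forall>z. agree n z c \<longrightarrow> \<bar>f z - f c\<bar> < e/2" for c
  proof -
    have "open (f -` ball (f c) (e/2))" by (rule open_vimage_if_continuous_on_UNIV[OF f open_ball])
    moreover have "c \<in> f -` ball (f c) (e/2)" using e by auto
    ultimately obtain n where "cylinder n c \<subseteq> f -` ball (f c) (e/2)"
      by (rule open_contains_cylinder)
    then have "\<forall>z. agree n z c \<longrightarrow> dist (f z) (f c) < e/2"
      by (auto simp: dist_commute)
    then show ?thesis by (auto simp: dist_real_def)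
  qed
  then obtain nc where nc: "\<And>c z. agree (nc c) z c \<Longrightarrow> \<bar>f z - f c\<bar> < e/2"
    by metis
  have "UNIV \<subseteq> (\<Union>c. cylinder (nc c) c)" by auto
  then obtain C where C: "finite C" "UNIV \<subseteq> (\<Union>c\<in>C. cylinder (nc c) c)"
    by (rule compactE_image[OF compact_UNIV_sigma open_cylinder]) auto
  obtain N where N: "nc ` C \<subseteq> {..<N}" using C(1) finite_nat_bounded by blast
  have "\<bar>f x - f y\<bar> < e" if "N \<le> n" "agree n x y" for n x y
  proof -
    obtain c where c: "c \<in> C" "x \<in> cylinder (nc c) c" using C(2) by blast
    have "nc c < N" using N c(1) by auto
    then have "nc c \<le> n" using that(1) by linarith
    then have "agree (nc c) y x" using agree_mono[OF agree_sym[OF that(2)]] by blast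
    then have "agree (nc c) y c" using c(2) agree_trans by simp
    moreover have "agree (nc c) x c" using c(2) by simp
    ultimately have "\<bar>f y - f c\<bar> < e/2" "\<bar>f x - f c\<bar> < e/2" using nc by blast+
    then show ?thesis by linarith
  qed
  then show thesis by (rule that)
qed

lemma abs_diff_le_var:
  assumes "continuous_on UNIV f" "agree n x y"
  shows "\<bar>f x - f y\<bar> \<le> var f n"
proof -
  obtain B where B: "\<And>x. \<bar>f x\<bar> \<le> B"
    using continuous_on_sigma_bounded[OF assms(1)] by blast
  have "bdd_above ((\<lambda>(x, y). \<bar>f x - f y\<bar>) ` {(x, y). agree n x y})"
  proof (rule bdd_aboveI[where M="2*B"])
    fix t assume "t \<in> (\<lambda>(x, y). \<bar>f x - f y\<bar>) ` {(x, y). agree n x y}"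
    then obtain a b where "t = \<bar>f a - f b\<bar>" by auto
    then show "t \<le> 2*B" using B[of a] B[of b] by linarith
  qed
  then show ?thesis
    unfolding var_def using assms(2) by (intro cSUP_upper2[where x="(x,y)"]) auto
qed

lemma var_nonneg: "continuous_on UNIV f \<Longrightarrow> 0 \<le> var f n"
  using abs_diff_le_var[of f n x x for x] by simp

lemma var_le:
  assumes "\<And>x y. agree n x y \<Longrightarrow> \<bar>f x - f y\<bar> \<le> e"
  shows "var f n \<le> e"
  unfolding var_def
proof (rule cSUP_least)
  show "{(x, y). agree n x y} \<noteq> {}" using agree_refl by blast
qed (use assms in auto)

lemma var_tendsto_0:
  assumes "continuous_on UNIV f"
  shows "var f \<longlonglongrightarrow> 0"
proof (rule LIMSEQ_I)
  fix r :: real assume "0 < r"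
  then obtain N where N: "\<And>n x y. N \<le> n \<Longrightarrow> agree n x y \<Longrightarrow> \<bar>f x - f y\<bar> < r/2"
    using continuous_on_sigma_uniformly[OF assms, of "r/2"] by auto
  have "var f n \<le> r/2" if "N \<le> n" for n
    using N[OF that] by (intro var_le less_imp_le)
  then show "\<exists>N. \<forall>n\<ge>N. norm (var f n - 0) < r"
    using var_nonneg[OF assms] \<open>0 < r\<close> by force
qed

lemma continuous_on_if_agree_bound:
  fixes f :: "sigma \<Rightarrow> real"
  assumes "\<And>n x y. agree n x y \<Longrightarrow> \<bar>f x - f y\<bar> \<le> e n" "e \<longlonglongrightarrow> 0"
  shows "continuous_on UNIV f"
proof (subst continuous_on_topological, intro ballI allI impI)
  fix x :: sigma and S :: "real set"
  assume S: "open S" "f x \<in> S"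
  then obtain r where r: "r > 0" "ball (f x) r \<subseteq> S" using open_contains_ball by blast
  obtain n where n: "\<bar>e n\<bar> < r" using LIMSEQ_D[OF assms(2) r(1)] by auto
  have "f y \<in> S" if "y \<in> cylinder n x" for y
    using assms(1)[of n y x] n r(2) that by (auto simp: dist_real_def)
  then show "\<exists>A. open A \<and> x \<in> A \<and> (\<forall>y\<in>UNIV. y \<in> A \<longrightarrow> f y \<in> S)"
    using open_cylinder[of n x] by (intro exI[of _ "cylinder n x"]) auto
qed

lemma continuous_on_indicator_cylinder:
  "continuous_on UNIV (indicator (cylinder p x) :: sigma \<Rightarrow> real)"
proof (rule continuous_on_if_agree_bound)
  show "\<bar>indicator (cylinder p x) z - indicator (cylinder p x) z'\<bar> \<le> (if p \<le> n then 0 else 1 :: real)"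
    if "agree n z z'" for n z z'
  proof (cases "p \<le> n")
    case True
    then have "agree p z z'" by (rule agree_mono[OF that])
    then have "agree p z x \<longleftrightarrow> agree p z' x" by (meson agree_sym agree_trans)
    then show ?thesis using True by (simp add: indicator_def)
  qed (simp add: indicator_def)
  show "(\<lambda>n. if p \<le> n then 0 else 1 :: real) \<longlonglongrightarrow> 0"
    by (rule tendsto_eventually) (auto simp: eventually_sequentially)
qed

section \<open>Borel probability measures on the shift space\<close>

lemma space_eq_UNIV_if_sets_borel: "sets M = sets (borel :: sigma measure) \<Longrightarrow> space M = UNIV"
  using sets_eq_imp_space_eq[of M borel] by simp

lemma borel_measurable_continuous_sigma:
  "sets M = sets borel \<Longrightarrow> continuous_on UNIV (f :: sigma \<Rightarrow> 'b::topological_space) \<Longrightarrow>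
    f \<in> borel_measurable M"
  using measurable_cong_sets[of M borel borel borel] borel_measurable_continuous_onI[of f] by auto

lemma integrable_continuous_sigma:
  assumes "finite_measure M" "sets M = sets borel" "continuous_on UNIV (f :: sigma \<Rightarrow> real)"
  shows "integrable M f"
proof -
  obtain B where "\<And>x. \<bar>f x\<bar> \<le> B" using continuous_on_sigma_bounded[OF assms(3)] by blast
  then show ?thesis
    using finite_measure.integrable_const_bound[OF assms(1), of f B]
      borel_measurable_continuous_sigma[OF assms(2,3)]
    by auto
qed

lemma integral_shift_eq_if_invariant_prob:
  assumes "invariant_prob M" "continuous_on UNIV (f :: sigma \<Rightarrow> real)"
  shows "integral\<^sup>L M (\<lambda>x. f (shift x)) = integral\<^sup>L M f"
proof -
  have "sets M = sets borel" "shift \<in> M \<rightarrow>\<^sub>M M" "distr M M shift = M"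
    using assms(1) by (auto simp: invariant_prob_def)
  then show ?thesis
    using integral_distr[of shift M M f] borel_measurable_continuous_sigma[OF _ assms(2)] by simp
qed

lemma shift_mem_support:
  assumes "invariant_prob M" "x \<in> support M"
  shows "shift x \<in> support M"
  unfolding support_def
proof (intro CollectI allI impI)
  fix U assume U: "open U \<and> shift x \<in> U"
  have sets: "sets M = sets borel" and sm: "shift \<in> M \<rightarrow>\<^sub>M M" and inv: "distr M M shift = M"
    using assms(1) by (auto simp: invariant_prob_def)
  have "open (shift -` U)" using open_vimage_if_continuous_on_UNIV[OF continuous_on_shift] U by blast
  then have "emeasure M (shift -` U) > 0" using assms(2) U by (auto simp: support_def)
  moreover have "emeasure (distr M M shift) U = emeasure M (shift -` U \<inter> space M)"
    using U sets by (intro emeasure_distr[OF sm]) simp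
  ultimately show "emeasure M U > 0"
    using inv space_eq_UNIV_if_sets_borel[OF sets] by simp
qed

lemma funpow_shift_mem_support:
  "invariant_prob M \<Longrightarrow> x \<in> support M \<Longrightarrow> (shift ^^ i) x \<in> support M"
  by (induction i) (auto intro: shift_mem_support)

lemma funpow_shift_mem_Mather: "x \<in> Mather H \<Longrightarrow> (shift ^^ i) x \<in> Mather H"
  by (auto simp: Mather_def minimizing_def intro: funpow_shift_mem_support)

lemma support_nonempty:
  assumes "prob_space M" "sets M = sets (borel :: sigma measure)"
  shows "support M \<noteq> {}"
proof
  assume "support M = {}"
  then have "\<exists>U. open U \<and> x \<in> U \<and> emeasure M U = 0" for x
    by (auto simp: support_def not_less)
  then obtain U where U: "\<And>x. open (U x)" "\<And>x. x \<in> U x" "\<And>x. emeasure M (U x) = 0"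
    by metis
  have "UNIV \<subseteq> (\<Union>x. U x)" using U(2) by blast
  then obtain C where C: "finite C" "UNIV \<subseteq> (\<Union>x\<in>C. U x)"
    by (rule compactE_image[OF compact_UNIV_sigma U(1)]) auto
  have "emeasure M UNIV \<le> emeasure M (\<Union>x\<in>C. U x)"
    using C U(1) assms(2) by (intro emeasure_mono) auto
  also have "\<dots> \<le> (\<Sum>x\<in>C. emeasure M (U x))"
    using U(1) assms(2) by (intro emeasure_subadditive_finite[OF C(1)]) auto
  finally show False
    using U(3) prob_space.emeasure_space_1[OF assms(1)] space_eq_UNIV_if_sets_borel[OF assms(2)] by simp
qed

lemma vanishes_on_support_if_integral_0:
  fixes f :: "sigma \<Rightarrow> real"
  assumes "finite_measure M" "sets M = sets borel" "continuous_on UNIV f"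
    and nonneg: "\<And>x. 0 \<le> f x" and "integral\<^sup>L M f = 0" and "x \<in> support M"
  shows "f x = 0"
proof (rule ccontr)
  assume "f x \<noteq> 0"
  with nonneg[of x] have pos: "f x > 0" by linarith
  define U where "U = f -` {f x / 2 <..}"
  have "open U" unfolding U_def by (rule open_vimage_if_continuous_on_UNIV[OF assms(3) open_greaterThan])
  moreover have "x \<in> U" using pos by (simp add: U_def)
  ultimately have "emeasure M U > 0" using assms(6) by (auto simp: support_def)
  then have "measure M U > 0"
    using finite_measure.emeasure_eq_measure[OF assms(1), of U] by simp
  have U_sets: "U \<in> sets M" using \<open>open U\<close> assms(2) by simp
  have "f x / 2 * measure M U = integral\<^sup>L M (\<lambda>z. f x / 2 * indicator U z)"
    using space_eq_UNIV_if_sets_borel[OF assms(2)] by simp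
  also have "\<dots> \<le> integral\<^sup>L M f"
  proof (rule integral_mono)
    show "integrable M (\<lambda>z. f x / 2 * indicator U z)"
      using U_sets finite_measure.emeasure_finite[OF assms(1), of U]
      by (intro integrable_mult_right) (simp add: top.not_eq_extremum)
    show "integrable M f" by (rule integrable_continuous_sigma[OF assms(1-3)])
    show "f x / 2 * indicator U z \<le> f z" for z
      using nonneg[of z] by (auto simp: U_def indicator_def)
  qed
  finally show False using assms(5) mult_pos_pos[OF pos \<open>measure M U > 0\<close>] by simp
qed

lemma cylinder_Int_cylinder:
  assumes "p \<le> q"
  shows "cylinder p x \<inter> cylinder q y = (if agree p y x then cylinder q y else {})"
proof (cases "agree p y x")
  case True
  have "z \<in> cylinder p x" if "z \<in> cylinder q y" for z
    using agree_trans[OF agree_mono[OF _ assms] True] that by simp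
  then show ?thesis unfolding if_P[OF True] by blast
next
  case False
  have "z \<notin> cylinder p x" if "z \<in> cylinder q y" for z
  proof
    assume "z \<in> cylinder p x"
    then have "agree p y x"
      using agree_trans[OF agree_sym[OF agree_mono[OF _ assms]]] that by simp
    with False show False ..
  qed
  then show ?thesis unfolding if_not_P[OF False] by blast
qed

definition cylinders :: "sigma set set" where
  "cylinders = insert {} {cylinder p x | p x. True}"

lemma Int_stable_cylinders: "Int_stable cylinders"
proof (rule Int_stableI)
  have le: "cylinder p x \<inter> cylinder q y \<in> cylinders" if "p \<le> q" for p q x y
    unfolding cylinder_Int_cylinder[OF that] cylinders_def by auto
  fix a b assume ab: "a \<in> cylinders" "b \<in> cylinders"
  show "a \<inter> b \<in> cylinders"
  proof (cases "a = {} \<or> b = {}")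
    case False
    then obtain p x q y where "a = cylinder p x" "b = cylinder q y"
      using ab by (auto simp: cylinders_def)
    then show ?thesis
      using le[of p q x y] le[of q p y x] by (cases "p \<le> q") (simp_all add: Int_commute)
  qed (auto simp: cylinders_def)
qed

text \<open>A cylinder is determined by the list of its first p symbols.\<close>

lemma countable_cylinders: "countable cylinders"
proof -
  have "cylinder p x \<in> range (\<lambda>xs. cylinder (length xs) (\<lambda>j. j < length xs \<and> xs ! j))" for p x
  proof (rule range_eqI[of _ _ "map x [0..<p]"])
    show "cylinder p x = cylinder (length (map x [0..<p]))
        (\<lambda>j. j < length (map x [0..<p]) \<and> map x [0..<p] ! j)"
      by (auto simp: cylinder_def agree_def)
  qed
  then have "{cylinder p x | p x. True} \<subseteq>
      range (\<lambda>xs. cylinder (length xs) (\<lambda>j. j < length xs \<and> xs ! j))"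
    by blast
  then have "countable {cylinder p x | p x. True}"
    by (rule countable_subset) simp
  then show ?thesis by (simp add: cylinders_def)
qed

lemma sets_borel_eq_sigma_cylinders: "sets (borel :: sigma measure) = sigma_sets UNIV cylinders"
proof -
  have "U \<in> sigma_sets UNIV cylinders" if "open U" for U :: "sigma set"
  proof -
    let ?C = "{c \<in> cylinders. c \<subseteq> U}"
    have "U = \<Union>?C"
    proof (intro equalityI subsetI)
      fix x assume "x \<in> U"
      then obtain n where "cylinder n x \<subseteq> U" using open_contains_cylinder[OF \<open>open U\<close>] by blast
      then show "x \<in> \<Union>?C" by (auto simp: cylinders_def intro!: exI[of _ "cylinder n x"])
    qed auto
    moreover have "\<Union>?C \<in> sigma_sets UNIV cylinders"
      using countable_subset[OF _ countable_cylinders]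
      by (intro sigma_algebra.countable_Union[OF sigma_algebra_sigma_sets]) auto
    ultimately show ?thesis by simp
  qed
  then have "sigma_sets UNIV {S. open S} \<subseteq> sigma_sets UNIV cylinders"
    by (intro sigma_sets_mono) auto
  moreover have "sigma_sets UNIV cylinders \<subseteq> sigma_sets UNIV {S. open S}"
    by (intro sigma_sets_mono) (auto simp: cylinders_def open_cylinder)
  ultimately show ?thesis unfolding sets_borel by blast
qed

lemma measure_eqI_cylinders:
  assumes "finite_measure M" "sets M = sets borel" "sets N = sets borel"
    and "\<And>p x. emeasure M (cylinder p x) = emeasure N (cylinder p x)"
  shows "M = N"
proof (rule measure_eqI_generator_eq[OF Int_stable_cylinders, where \<Omega>=UNIV and A="\<lambda>_. UNIV"])
  show "sets M = sigma_sets UNIV cylinders" "sets N = sigma_sets UNIV cylinders"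
    using assms(2,3) sets_borel_eq_sigma_cylinders by simp_all
  show "X \<in> cylinders \<Longrightarrow> emeasure M X = emeasure N X" for X
    using assms(4) by (auto simp: cylinders_def)
  have "UNIV = cylinder 0 x" for x by (auto simp: agree_def)
  then show "range (\<lambda>_. UNIV) \<subseteq> cylinders" by (auto simp: cylinders_def)
  show "emeasure M UNIV \<noteq> \<infinity>" using finite_measure.emeasure_finite[OF assms(1)] by simp
qed auto

definition periodic_measure :: "nat \<Rightarrow> sigma \<Rightarrow> sigma measure" where
  "periodic_measure k z =
     distr (measure_pmf (pmf_of_set {..<k})) borel (\<lambda>i. (shift ^^ i) (\<lambda>j. z (j mod k)))"

lemma invariant_prob_periodic_measure:
  assumes "k > 0"
  shows "invariant_prob (periodic_measure k z)"
proof -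
  define g where "g i = (shift ^^ i) (\<lambda>j. z (j mod k))" for i
  define P where "P = measure_pmf (pmf_of_set {..<k})"
  define rot where "rot i = Suc i mod k" for i
  have P_eq: "periodic_measure k z = distr P borel g"
    unfolding periodic_measure_def P_def g_def by simp
  have g_meas: "g \<in> measurable P borel" by (simp add: P_def)
  have sets: "sets (periodic_measure k z) = sets borel" by (simp add: P_eq)
  have shift_meas: "shift \<in> periodic_measure k z \<rightarrow>\<^sub>M periodic_measure k z"
    using borel_measurable_continuous_onI[OF continuous_on_shift] measurable_cong_sets[OF sets sets]
    by simp
  have "inj_on rot {..<k}"
    by (rule inj_onI) (auto simp: rot_def mod_Suc split: if_splits)
  moreover have "rot ` {..<k} = {..<k}"
    using \<open>inj_on rot {..<k}\<close> by (intro endo_inj_surj) (auto simp: rot_def assms)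
  ultimately have P_rot: "distr P (count_space UNIV) rot = P"
    unfolding P_def map_pmf_rep_eq[symmetric] using map_pmf_of_set_inj assms by fastforce
  have "shift \<circ> g = g \<circ> rot"
    by (auto simp: g_def rot_def funpow_shift shift_def mod_add_right_eq)
  then have "distr (periodic_measure k z) (periodic_measure k z) shift = distr P borel (g \<circ> rot)"
    unfolding P_eq using g_meas shift_meas P_eq
    by (subst distr_distr) (auto intro!: distr_cong simp: sets)
  also have "\<dots> = distr (distr P (count_space UNIV) rot) borel g"
    by (rule distr_distr[symmetric]) (auto simp: P_def)
  finally have "distr (periodic_measure k z) (periodic_measure k z) shift = periodic_measure k z"
    by (simp add: P_rot P_eq)
  moreover have "prob_space (periodic_measure k z)"
    unfolding P_eq by (rule prob_space.prob_space_distr[OF _ g_meas]) (simp add: P_def prob_space_measure_pmf)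
  ultimately show ?thesis unfolding invariant_prob_def using sets shift_meas by auto
qed

lemma integral_periodic_measure:
  assumes "k > 0" "continuous_on UNIV (f :: sigma \<Rightarrow> real)"
  shows "integral\<^sup>L (periodic_measure k z) f = (\<Sum>i<k. f ((shift ^^ i) (\<lambda>j. z (j mod k)))) / real k"
proof -
  have "{..<k} \<noteq> {}" "finite {..<k}" using assms(1) by auto
  then show ?thesis unfolding periodic_measure_def
    by (subst integral_distr) (auto simp: integral_pmf_of_set borel_measurable_continuous_onI[OF assms(2)])
qed

section \<open>Limits of empirical measures\<close>

lemma geometric_tail_bound:
  fixes b :: "nat \<Rightarrow> real"
  assumes b: "\<And>j. \<bar>b j\<bar> \<le> (1/4) ^ j"
  shows "summable b" "\<bar>\<Sum>j. b (j + n)\<bar> \<le> 4/3 * (1/4) ^ n"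
proof -
  have "(\<lambda>j. (1/4) ^ n * (1/4 :: real) ^ j) sums ((1/4) ^ n * (4/3))"
    using sums_mult[OF geometric_sums[of "1/4 :: real"]] by simp
  then have geo: "(\<lambda>j. (1/4 :: real) ^ (j + n)) sums (4/3 * (1/4) ^ n)"
    by (simp add: power_add mult.commute)
  have bound: "\<bar>b (j + n)\<bar> \<le> (1/4) ^ (j + n)" for j by (rule b)
  have "summable (\<lambda>j. b (j + n))"
    by (rule summable_comparison_test[OF _ sums_summable[OF geo]]) (use bound in auto)
  then show "summable b" using summable_iff_shift by blast
  have "summable (\<lambda>j. \<bar>b (j + n)\<bar>)"
    by (rule summable_comparison_test[OF _ sums_summable[OF geo]]) (use bound in auto)
  then have "\<bar>\<Sum>j. b (j + n)\<bar> \<le> (\<Sum>j. \<bar>b (j + n)\<bar>)" by (rule summable_rabs)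
  also have "\<dots> \<le> (\<Sum>j. (1/4) ^ (j + n))"
    by (rule suminf_le[OF bound \<open>summable (\<lambda>j. \<bar>b (j + n)\<bar>)\<close> sums_summable[OF geo]])
  also have "\<dots> = 4/3 * (1/4) ^ n" using sums_unique[OF geo] by simp
  finally show "\<bar>\<Sum>j. b (j + n)\<bar> \<le> 4/3 * (1/4) ^ n" .
qed

text \<open>Embedding the shift space into the reals makes Helly's selection theorem for real
  distributions available.\<close>

definition cantor_digit :: "sigma \<Rightarrow> nat \<Rightarrow> real" where
  "cantor_digit z j = (if z j then (1/4) ^ j else 0)"

definition cantor_embedding :: "sigma \<Rightarrow> real" where
  "cantor_embedding z = suminf (cantor_digit z)"

lemma abs_cantor_digit_diff_le: "\<bar>cantor_digit z j - cantor_digit z' j\<bar> \<le> (1/4) ^ j"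
  by (simp add: cantor_digit_def)

lemma cantor_embedding_bounds: "0 \<le> cantor_embedding z \<and> cantor_embedding z \<le> 4/3"
proof -
  have bound: "\<bar>cantor_digit z j\<bar> \<le> (1/4) ^ j" for j by (simp add: cantor_digit_def)
  have "0 \<le> suminf (cantor_digit z)"
    by (rule suminf_nonneg[OF geometric_tail_bound(1)[OF bound]]) (simp add: cantor_digit_def)
  moreover have "\<bar>\<Sum>j. cantor_digit z (j + 0)\<bar> \<le> 4/3 * (1/4) ^ 0"
    by (rule geometric_tail_bound(2)[OF bound])
  ultimately show ?thesis by (simp add: cantor_embedding_def)
qed

lemma cantor_embedding_diff_eq_tail:
  assumes "agree n z z'"
  shows "cantor_embedding z - cantor_embedding z' = (\<Sum>j. cantor_digit z (j + n) - cantor_digit z' (j + n))"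
proof -
  have summable: "summable (\<lambda>j. cantor_digit z j - cantor_digit z' j)"
    by (rule geometric_tail_bound(1)[OF abs_cantor_digit_diff_le])
  have "cantor_embedding z - cantor_embedding z' = (\<Sum>j. cantor_digit z j - cantor_digit z' j)"
    unfolding cantor_embedding_def
    by (intro suminf_diff geometric_tail_bound(1)) (simp_all add: cantor_digit_def)
  moreover have "\<And>j. j < n \<Longrightarrow> cantor_digit z j - cantor_digit z' j = 0"
    using assms by (simp add: cantor_digit_def agree_def)
  ultimately show ?thesis using suminf_split_initial_segment[OF summable, of n] by simp
qed

lemma cantor_embedding_agree:
  "agree n z z' \<Longrightarrow> \<bar>cantor_embedding z - cantor_embedding z'\<bar> \<le> 4/3 * (1/4) ^ n"
  unfolding cantor_embedding_diff_eq_tail by (rule geometric_tail_bound(2)[OF abs_cantor_digit_diff_le])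

lemma continuous_on_cantor_embedding: "continuous_on UNIV cantor_embedding"
proof (rule continuous_on_if_agree_bound[OF cantor_embedding_agree])
  show "(\<lambda>n. 4/3 * (1/4 :: real) ^ n) \<longlonglongrightarrow> 0"
    using tendsto_mult_right_zero[OF LIMSEQ_power_zero[of "1/4 :: real"]] by simp
qed

text \<open>At the first index i where z and z' differ, the digit difference (1/4)^i exceeds the bound
  (1/3)(1/4)^i on the remaining tail.\<close>

lemma inj_cantor_embedding: "inj cantor_embedding"
proof (rule injI, rule ccontr)
  fix z z' assume eq: "cantor_embedding z = cantor_embedding z'" and "z \<noteq> z'"
  then obtain i where i: "z i \<noteq> z' i" "\<And>j. j < i \<Longrightarrow> z j = z' j"
    using exists_least_iff[of "\<lambda>i. z i \<noteq> z' i"] by (auto simp: fun_eq_iff)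
  define d where "d j = cantor_digit z j - cantor_digit z' j" for j
  have "summable d"
    unfolding d_def[abs_def] by (rule geometric_tail_bound(1)[OF abs_cantor_digit_diff_le])
  then have summable: "summable (\<lambda>j. d (j + i))" by (rule summable_iff_shift[THEN iffD2])
  have "agree i z z'" using i(2) by (simp add: agree_def)
  then have "cantor_embedding z - cantor_embedding z' = (\<Sum>j. d (j + i))"
    unfolding d_def by (rule cantor_embedding_diff_eq_tail)
  then have "0 = (\<Sum>j. d (j + i))" using eq by simp
  also have "\<dots> = (\<Sum>j. d (j + Suc i)) + d i"
    using suminf_split_initial_segment[OF summable, of 1] by (simp add: add.commute)
  finally have "\<bar>d i\<bar> = \<bar>\<Sum>j. d (j + Suc i)\<bar>" by linarith
  also have "\<dots> \<le> 1/3 * (1/4) ^ i"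
    using geometric_tail_bound(2)[OF abs_cantor_digit_diff_le[of z _ z'], where n="Suc i"]
    by (simp add: d_def)
  finally have "\<bar>d i\<bar> \<le> 1/3 * (1/4) ^ i" .
  moreover have "\<bar>d i\<bar> = (1/4) ^ i" using i(1) by (cases "z i") (simp_all add: d_def cantor_digit_def)
  ultimately show False using zero_less_power[of "1/4 :: real" i] by linarith
qed

definition empirical_limit ::
    "(nat \<Rightarrow> 'a::topological_space) \<Rightarrow> (nat \<Rightarrow> nat) \<Rightarrow> 'a measure \<Rightarrow> bool" where
  "empirical_limit t r M \<longleftrightarrow> (\<forall>f :: 'a \<Rightarrow> real. continuous_on UNIV f \<longrightarrow> bounded (range f) \<longrightarrow>
     (\<lambda>i. (\<Sum>j<Suc (r i). f (t j)) / real (Suc (r i))) \<longlonglongrightarrow> integral\<^sup>L M f)"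

lemma empirical_limitD:
  "empirical_limit t r M \<Longrightarrow> continuous_on UNIV f \<Longrightarrow> bounded (range f) \<Longrightarrow>
    (\<lambda>i. (\<Sum>j<Suc (r i). f (t j)) / real (Suc (r i))) \<longlonglongrightarrow> integral\<^sup>L M f"
  by (simp add: empirical_limit_def)

lemma empirical_limit_real_exists:
  fixes t :: "nat \<Rightarrow> real"
  assumes "\<And>j. t j \<in> {a<..b}"
  obtains r \<mu> where "strict_mono r" "real_distribution \<mu>" "empirical_limit t r \<mu>"
proof -
  define P where "P N = measure_pmf (pmf_of_set {..<Suc N})" for N
  define emp where "emp N = distr (P N) borel t" for N
  have t_meas: "t \<in> measurable (P N) borel" for N by (simp add: P_def)
  have distr_emp: "real_distribution (emp N)" for N
    unfolding emp_def P_def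
    by (intro real_distribution.intro real_distribution_axioms.intro prob_space.prob_space_distr)
      (simp_all add: prob_space_measure_pmf)
  have integral_emp: "integral\<^sup>L (emp N) G = (\<Sum>j<Suc N. G (t j)) / real (Suc N)"
    if "G \<in> borel_measurable borel" for N and G :: "real \<Rightarrow> real"
  proof -
    have "{..<Suc N} \<noteq> {}" "finite {..<Suc N}" by auto
    then show ?thesis
      unfolding emp_def P_def using that by (subst integral_distr) (simp_all add: integral_pmf_of_set)
  qed
  have "measure (emp N) {a<..b} = 1" for N
  proof -
    have "measure (emp N) {a<..b} = measure (P N) (t -` {a<..b} \<inter> space (P N))"
      unfolding emp_def by (rule measure_distr[OF t_meas]) simp
    also have "t -` {a<..b} \<inter> space (P N) = space (P N)" using assms by auto
    finally show ?thesis by (simp add: P_def measure_pmf.prob_space)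
  qed
  moreover have "a < b" using assms[of 0] by simp
  ultimately have "tight emp"
    unfolding tight_def using distr_emp by (intro conjI allI impI exI[of _ a] exI[of _ b]) auto
  then obtain r \<mu> where r: "strict_mono r" and \<mu>: "real_distribution \<mu>"
    and weak: "weak_conv_m (emp \<circ> id \<circ> r) \<mu>"
    using tight_imp_convergent_subsubsequence[of emp id] by (auto simp: strict_mono_def)
  have "empirical_limit t r \<mu>"
    unfolding empirical_limit_def
  proof (intro allI impI)
    fix G :: "real \<Rightarrow> real" assume G: "continuous_on UNIV G" "bounded (range G)"
    then obtain B where B: "\<And>s. norm (G s) \<le> B" by (auto simp: bounded_iff)
    have "(\<lambda>n. integral\<^sup>L ((emp \<circ> r) n) G) \<longlonglongrightarrow> integral\<^sup>L \<mu> G"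
      using weak_conv_imp_integral_bdd_continuous_conv[OF _ \<mu>, of "emp \<circ> r" G B] weak distr_emp G(1) B
      by (simp add: continuous_on_eq_continuous_at)
    then show "(\<lambda>i. (\<Sum>j<Suc (r i). G (t j)) / real (Suc (r i))) \<longlonglongrightarrow> integral\<^sup>L \<mu> G"
      using integral_emp borel_measurable_continuous_onI[OF G(1)] by simp
  qed
  with r \<mu> show thesis by (rule that)
qed

lemma AE_mem_closed_if_empirical_limit:
  fixes t :: "nat \<Rightarrow> real"
  assumes "empirical_limit t r \<mu>" "real_distribution \<mu>" "closed K" "K \<noteq> {}" "\<And>j. t j \<in> K"
  shows "AE s in \<mu>. s \<in> K"
proof -
  interpret real_distribution \<mu> by (rule assms(2))
  define g where "g s = min 1 (infdist s K)" for s
  have g_cont: "continuous_on UNIV g" unfolding g_def by (intro continuous_intros)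
  have g_bound: "\<bar>g s\<bar> \<le> 1" for s unfolding g_def using infdist_nonneg[of s K] by auto
  then have "bounded (range g)" by (intro boundedI[of _ 1]) auto
  then have "(\<lambda>i. (\<Sum>j<Suc (r i). g (t j)) / real (Suc (r i))) \<longlonglongrightarrow> integral\<^sup>L \<mu> g"
    by (rule empirical_limitD[OF assms(1) g_cont])
  moreover have "g (t j) = 0" for j using assms(5) by (simp add: g_def)
  ultimately have "integral\<^sup>L \<mu> g = 0" by (simp add: LIMSEQ_const_iff)
  moreover have "integrable \<mu> g"
    using g_bound borel_measurable_continuous_onI[OF g_cont] by (intro integrable_const_bound[where B=1]) auto
  moreover have "AE s in \<mu>. 0 \<le> g s" by (simp add: g_def infdist_nonneg)
  ultimately have "AE s in \<mu>. g s = 0" using integral_nonneg_eq_0_iff_AE by blast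
  then show ?thesis
  proof (rule AE_mp, intro AE_I2 impI)
    fix s assume "g s = 0"
    then have "infdist s K = 0" by (simp add: g_def min_def split: if_splits)
    then show "s \<in> K" using in_closure_iff_infdist_zero[OF assms(4)] assms(3) by simp
  qed
qed

definition cantor_inverse :: "real \<Rightarrow> sigma" where
  "cantor_inverse s =
     (if s \<in> range cantor_embedding then the_inv_into UNIV cantor_embedding s else (\<lambda>_. False))"

lemma cantor_inverse_embedding [simp]: "cantor_inverse (cantor_embedding z) = z"
  unfolding cantor_inverse_def by (simp add: the_inv_into_f_f[OF inj_cantor_embedding])

lemma closed_range_cantor_embedding: "closed (range cantor_embedding)"
  by (rule compact_imp_closed[OF compact_continuous_image[OF continuous_on_cantor_embedding compact_UNIV_sigma]])

lemma continuous_on_cantor_inverse: "continuous_on (range cantor_embedding) cantor_inverse"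
proof -
  have "continuous_on (range cantor_embedding) (the_inv_into UNIV cantor_embedding)"
    by (rule continuous_on_inv_into[OF continuous_on_cantor_embedding compact_UNIV_sigma inj_cantor_embedding])
  then show ?thesis by (rule continuous_on_cong[THEN iffD1, rotated 2]) (simp_all add: cantor_inverse_def)
qed

lemma borel_measurable_cantor_inverse: "cantor_inverse \<in> borel_measurable borel"
proof -
  have "(\<lambda>s. if s \<in> range cantor_embedding then cantor_inverse s else (\<lambda>_. False)) \<in> borel_measurable borel"
    by (rule borel_measurable_continuous_on_if[OF borel_closed[OF closed_range_cantor_embedding]
          continuous_on_cantor_inverse continuous_on_const])
  moreover have "(\<lambda>s. if s \<in> range cantor_embedding then cantor_inverse s else (\<lambda>_. False)) = cantor_inverse"
    by (auto simp: cantor_inverse_def)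
  ultimately show ?thesis by simp
qed

text \<open>A continuous f on the shift space is integrated against the transported measure as its
  Tietze extension from the Cantor set is integrated against the real one.\<close>

lemma empirical_limit_distr_cantor_inverse:
  assumes "real_distribution \<mu>" and lim: "empirical_limit (\<lambda>j. cantor_embedding (w j)) r \<mu>"
  shows "empirical_limit w r (distr \<mu> borel cantor_inverse)"
  unfolding empirical_limit_def
proof (intro allI impI)
  interpret real_distribution \<mu> by (rule assms(1))
  let ?K = "range cantor_embedding"
  fix f :: "sigma \<Rightarrow> real" assume f: "continuous_on UNIV f" "bounded (range f)"
  then obtain B where B: "\<And>z. \<bar>f z\<bar> \<le> B" by (auto simp: bounded_iff)
  have "0 \<le> B" using B[of undefined] by linarith
  have "continuous_on ?K (\<lambda>s. f (cantor_inverse s))"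
    by (rule continuous_on_compose2[OF f(1) continuous_on_cantor_inverse]) auto
  then obtain G where G: "continuous_on UNIV G" "\<And>s. s \<in> ?K \<Longrightarrow> G s = f (cantor_inverse s)"
      "\<And>s. s \<in> UNIV \<Longrightarrow> norm (G s) \<le> B"
    using Tietze[OF _ _ \<open>0 \<le> B\<close>, of ?K "\<lambda>s. f (cantor_inverse s)" UNIV]
      closed_range_cantor_embedding B
    by (auto simp: closedin_closed_eq)
  have "AE s in \<mu>. s \<in> ?K"
    using AE_mem_closed_if_empirical_limit[OF lim assms(1) closed_range_cantor_embedding] by simp
  then have "integral\<^sup>L \<mu> (\<lambda>s. f (cantor_inverse s)) = integral\<^sup>L \<mu> G"
    using measurable_comp[OF borel_measurable_cantor_inverse borel_measurable_continuous_onI[OF f(1)]]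
      borel_measurable_continuous_onI[OF G(1)]
    by (intro integral_cong_AE) (auto simp: comp_def G(2) elim: AE_mp)
  then have "integral\<^sup>L (distr \<mu> borel cantor_inverse) f = integral\<^sup>L \<mu> G"
    using borel_measurable_cantor_inverse borel_measurable_continuous_onI[OF f(1)]
    by (simp add: integral_distr)
  moreover have "bounded (range G)" using G(3) by (intro boundedI) blast
  then have "(\<lambda>i. (\<Sum>j<Suc (r i). G (cantor_embedding (w j))) / real (Suc (r i))) \<longlonglongrightarrow> integral\<^sup>L \<mu> G"
    by (rule empirical_limitD[OF lim G(1)])
  moreover have "G (cantor_embedding z) = f z" for z using G(2)[of "cantor_embedding z"] by simp
  ultimately show "(\<lambda>i. (\<Sum>j<Suc (r i). f (w j)) / real (Suc (r i)))
      \<longlonglongrightarrow> integral\<^sup>L (distr \<mu> borel cantor_inverse) f"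
    by simp
qed

text \<open>Krylov--Bogolyubov, via the Cantor embedding and Helly's selection theorem.\<close>

lemma empirical_limit_exists:
  fixes w :: "nat \<Rightarrow> sigma"
  obtains r M where "strict_mono r" "prob_space M" "sets M = sets borel" "empirical_limit w r M"
proof -
  have "cantor_embedding (w j) \<in> {-1<..2}" for j using cantor_embedding_bounds[of "w j"] by auto
  then obtain r \<mu> where r: "strict_mono r" and \<mu>: "real_distribution \<mu>"
    and lim: "empirical_limit (\<lambda>j. cantor_embedding (w j)) r \<mu>"
    by (rule empirical_limit_real_exists)
  interpret real_distribution \<mu> by (rule \<mu>)
  have "prob_space (distr \<mu> borel cantor_inverse)"
    by (rule prob_space_distr) (simp add: borel_measurable_cantor_inverse)
  moreover have "sets (distr \<mu> borel cantor_inverse) = sets borel" by simp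
  ultimately show thesis
    using empirical_limit_distr_cantor_inverse[OF \<mu> lim] by (rule that[OF r])
qed

lemma empirical_limit_inverse_tendsto_0:
  "strict_mono r \<Longrightarrow> (\<lambda>i. c / real (Suc (r i))) \<longlonglongrightarrow> 0"
  using LIMSEQ_subseq_LIMSEQ[OF lim_const_over_n[of c], of "\<lambda>i. Suc (r i)"]
  by (simp add: strict_mono_def comp_def)

text \<open>Along a backward orbit, the averages of f and of f \<circ> shift differ by a boundary term
  of order 1/n.\<close>

lemma integral_shift_eq_if_empirical_limit:
  assumes M: "sets M = sets borel" "empirical_limit w r M" "strict_mono r"
    and backward: "\<And>j. shift (w (Suc j)) = w j"
    and f: "continuous_on UNIV (f :: sigma \<Rightarrow> real)"
  shows "integral\<^sup>L M (\<lambda>z. f (shift z)) = integral\<^sup>L M f"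
proof -
  obtain B where B: "\<And>z. \<bar>f z\<bar> \<le> B" using continuous_on_sigma_bounded[OF f] by blast
  have bounded: "bounded (range f)" "bounded (range (\<lambda>z. f (shift z)))"
    using B by (auto intro!: boundedI)
  define d where "d i = (\<Sum>j<Suc (r i). f (shift (w j))) / real (Suc (r i)) -
      (\<Sum>j<Suc (r i). f (w j)) / real (Suc (r i))" for i
  have "d \<longlonglongrightarrow> integral\<^sup>L M (\<lambda>z. f (shift z)) - integral\<^sup>L M f"
    unfolding d_def using M(2) f bounded
    by (intro tendsto_diff empirical_limitD continuous_on_compose_shift)
  moreover have "d \<longlonglongrightarrow> 0"
  proof (rule Lim_null_comparison[OF _ empirical_limit_inverse_tendsto_0[OF M(3), of "2 * B"]])
    have "(\<Sum>j<Suc n. f (shift (w j))) = f (shift (w 0)) + (\<Sum>j<n. f (w j))" for n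
      unfolding sum.lessThan_Suc_shift backward ..
    then have "(\<Sum>j<Suc n. f (shift (w j))) - (\<Sum>j<Suc n. f (w j)) = f (shift (w 0)) - f (w n)" for n
      by simp
    then have "d i = (f (shift (w 0)) - f (w (r i))) / real (Suc (r i))" for i
      unfolding d_def diff_divide_distrib[symmetric] by presburger
    moreover have "\<bar>f (shift (w 0)) - f (w (r i))\<bar> \<le> 2 * B" for i
      using B[of "shift (w 0)"] B[of "w (r i)"] by linarith
    ultimately show "\<forall>\<^sub>F i in sequentially. norm (d i) \<le> 2 * B / real (Suc (r i))"
      by (simp add: abs_divide divide_right_mono)
  qed
  ultimately have "integral\<^sup>L M (\<lambda>z. f (shift z)) - integral\<^sup>L M f = 0"
    by (rule LIMSEQ_unique)
  then show ?thesis by simp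
qed

lemma invariant_prob_if_empirical_limit:
  assumes M: "prob_space M" "sets M = sets borel" "empirical_limit w r M" "strict_mono r"
    and backward: "\<And>j. shift (w (Suc j)) = w j"
  shows "invariant_prob M"
proof -
  interpret prob_space M by (rule M(1))
  have space: "space M = UNIV" by (rule space_eq_UNIV_if_sets_borel[OF M(2)])
  have shift_meas: "shift \<in> M \<rightarrow>\<^sub>M M"
    using borel_measurable_continuous_onI[OF continuous_on_shift] measurable_cong_sets[OF M(2) M(2)]
    by simp
  have "distr M M shift = M"
  proof (rule measure_eqI_cylinders)
    show "finite_measure (distr M M shift)" by (rule finite_measure_distr[OF shift_meas])
    show "sets (distr M M shift) = sets borel" "sets M = sets borel" using M(2) by simp_all
    fix p x
    have cyl: "cylinder p x \<in> sets M" using open_cylinder M(2) by simp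
    have "emeasure (distr M M shift) (cylinder p x) = measure M (shift -` cylinder p x)"
      using emeasure_distr[OF shift_meas cyl] space by (simp add: emeasure_eq_measure)
    also have "measure M (shift -` cylinder p x) = integral\<^sup>L M (\<lambda>z. indicator (cylinder p x) (shift z))"
      using space by (simp add: indicator_vimage[symmetric])
    also have "\<dots> = integral\<^sup>L M (indicator (cylinder p x))"
      by (rule integral_shift_eq_if_empirical_limit[OF M(2-4) backward continuous_on_indicator_cylinder])
    also have "\<dots> = measure M (cylinder p x)" using space by simp
    finally show "emeasure (distr M M shift) (cylinder p x) = emeasure M (cylinder p x)"
      by (simp add: emeasure_eq_measure)
  qed
  then show ?thesis unfolding invariant_prob_def using M(1,2) shift_meas by simp
qed

text \<open>A cylinder around a support point has positive mass, which cannot be the limit of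
  frequencies of a set of times that is finite.\<close>

lemma recurrent_if_mem_support:
  assumes M: "prob_space M" "sets M = sets borel" "empirical_limit w r M" "strict_mono r"
    and "x \<in> support M"
  shows "\<exists>j\<ge>N. agree p (w j) x"
proof (rule ccontr)
  interpret prob_space M by (rule M(1))
  assume "\<not> (\<exists>j\<ge>N. agree p (w j) x)"
  then have zero: "\<And>j. N \<le> j \<Longrightarrow> indicator (cylinder p x) (w j) = (0 :: real)" by auto
  have count_le: "(\<Sum>j<n. indicator (cylinder p x) (w j)) \<le> (real N :: real)" for n
  proof -
    have "(\<Sum>j<n. indicator (cylinder p x) (w j)) =
        (\<Sum>j\<in>{..<n} \<inter> {..<N}. indicator (cylinder p x) (w j) :: real)"
      by (intro sum.mono_neutral_right) (auto, meson not_less zero)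
    also have "\<dots> \<le> real (card ({..<n} \<inter> {..<N})) * 1"
      by (rule sum_bounded_above) (simp add: indicator_def)
    also have "\<dots> \<le> real N" using card_mono[of "{..<N}" "{..<n} \<inter> {..<N}"] by simp
    finally show ?thesis .
  qed
  have "(\<Sum>j<Suc (r i). indicator (cylinder p x) (w j)) / real (Suc (r i)) \<le> real N / real (Suc (r i))"
    for i by (rule divide_right_mono[OF count_le]) simp
  moreover have "(\<lambda>i. (\<Sum>j<Suc (r i). indicator (cylinder p x) (w j)) / real (Suc (r i)))
      \<longlonglongrightarrow> measure M (cylinder p x)"
  proof -
    have "bounded (range (indicator (cylinder p x) :: sigma \<Rightarrow> real))"
      by (intro boundedI[of _ 1]) auto
    then show ?thesis
      using empirical_limitD[OF M(3) continuous_on_indicator_cylinder]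
        space_eq_UNIV_if_sets_borel[OF M(2)] open_cylinder M(2)
      by simp
  qed
  ultimately have "measure M (cylinder p x) \<le> 0"
    by (intro LIMSEQ_le[OF _ empirical_limit_inverse_tendsto_0[OF M(4)]]) auto
  moreover have "emeasure M (cylinder p x) > 0"
    using \<open>x \<in> support M\<close> open_cylinder by (auto simp: support_def)
  ultimately show False by (simp add: emeasure_eq_measure)
qed

section \<open>Birkhoff sums, sub-actions and the Peierls barrier\<close>

definition var_tail :: "(sigma \<Rightarrow> real) \<Rightarrow> nat \<Rightarrow> real" where
  "var_tail H n = (\<Sum>k. var H (k + n + 1))"

definition birkhoff_sum :: "(sigma \<Rightarrow> real) \<Rightarrow> nat \<Rightarrow> sigma \<Rightarrow> real" where
  "birkhoff_sum H k z = (\<Sum>i<k. H ((shift ^^ i) z) - Hbar H)"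

lemma birkhoff_sum_0 [simp]: "birkhoff_sum H 0 z = 0"
  by (simp add: birkhoff_sum_def)

lemma birkhoff_sum_Suc: "birkhoff_sum H (Suc k) z = birkhoff_sum H k z + H ((shift ^^ k) z) - Hbar H"
  by (simp add: birkhoff_sum_def)

lemma birkhoff_sum_Suc_left: "birkhoff_sum H (Suc k) z = H z - Hbar H + birkhoff_sum H k (shift z)"
  unfolding birkhoff_sum_def sum.lessThan_Suc_shift funpow_shift_Suc by simp

lemma birkhoff_sum_eq: "birkhoff_sum H k z = (\<Sum>i<k. H ((shift ^^ i) z)) - real k * Hbar H"
  by (simp add: birkhoff_sum_def sum_subtractf)

definition subaction_defect :: "(sigma \<Rightarrow> real) \<Rightarrow> (sigma \<Rightarrow> real) \<Rightarrow> sigma \<Rightarrow> real" where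
  "subaction_defect H u x = H x - Hbar H + u x - u (shift x)"

lemma birkhoff_sum_telescope:
  "birkhoff_sum H m x =
     (\<Sum>i<m. subaction_defect H u ((shift ^^ i) x)) + u ((shift ^^ m) x) - u x"
  by (induction m) (simp_all add: birkhoff_sum_Suc subaction_defect_def)

lemma continuous_on_subaction_defect:
  "continuous_on UNIV H \<Longrightarrow> continuous_on UNIV u \<Longrightarrow> continuous_on UNIV (subaction_defect H u)"
  unfolding subaction_defect_def by (intro continuous_intros continuous_on_compose_shift)

definition infimal_subaction :: "(sigma \<Rightarrow> real) \<Rightarrow> sigma \<Rightarrow> real" where
  "infimal_subaction H y = Inf {birkhoff_sum H k z | k z. (shift ^^ k) z = y}"

lemma calibrated_subactionI:
  assumes "continuous_on UNIV u" "\<And>z. u (shift z) \<le> u z + H z - Hbar H"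
    and "\<And>y. LaxOleinik H u y \<le> u y + Hbar H"
  shows "calibrated_subaction H u"
proof -
  have "u y + Hbar H \<le> LaxOleinik H u y" for y
    using assms(2)[of "prepend False y"] assms(2)[of "prepend True y"] by (simp add: LaxOleinik_eq_min)
  then show ?thesis using assms(1,3) by (simp add: calibrated_subaction_def order_antisym)
qed

lemma subaction_defect_calibrated_nonneg:
  assumes "calibrated_subaction H V"
  shows "0 \<le> subaction_defect H V z"
proof -
  have "LaxOleinik H V (shift z) \<le> V z + H z"
    using prepend_shift[of z] by (cases "z 0") (simp_all add: LaxOleinik_eq_min min.coboundedI1 min.coboundedI2)
  then show ?thesis using assms by (simp add: calibrated_subaction_def subaction_defect_def)
qed

lemma calibrated_subaction_preimage:
  assumes "calibrated_subaction H V"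
  shows "\<exists>z. shift z = y \<and> subaction_defect H V z = 0"
proof -
  have "min (V (prepend False y) + H (prepend False y)) (V (prepend True y) + H (prepend True y)) =
      V y + Hbar H"
    using assms by (simp add: calibrated_subaction_def LaxOleinik_eq_min)
  then obtain b where "V (prepend b y) + H (prepend b y) = V y + Hbar H"
    by (metis min_def)
  then show ?thesis
    by (intro exI[of _ "prepend b y"]) (simp add: subaction_defect_def)
qed

definition calibrating_orbit :: "(sigma \<Rightarrow> real) \<Rightarrow> (sigma \<Rightarrow> real) \<Rightarrow> sigma \<Rightarrow> nat \<Rightarrow> sigma" where
  "calibrating_orbit H V y j = ((\<lambda>w. SOME z. shift z = w \<and> subaction_defect H V z = 0) ^^ j) y"

context
  fixes H V :: "sigma \<Rightarrow> real"
  assumes calibrated: "calibrated_subaction H V"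
begin

lemma calibrating_orbit_Suc:
  "shift (calibrating_orbit H V y (Suc j)) = calibrating_orbit H V y j"
  "subaction_defect H V (calibrating_orbit H V y (Suc j)) = 0"
  using someI_ex[OF calibrated_subaction_preimage[OF calibrated, of "calibrating_orbit H V y j"]]
  by (simp_all add: calibrating_orbit_def)

lemma funpow_shift_calibrating_orbit: "(shift ^^ j) (calibrating_orbit H V y j) = y"
proof (induction j)
  case (Suc j)
  have "(shift ^^ Suc j) (calibrating_orbit H V y (Suc j)) =
      (shift ^^ j) (shift (calibrating_orbit H V y (Suc j)))"
    by (rule funpow_shift_Suc)
  then show ?case using Suc calibrating_orbit_Suc(1) by simp
qed (simp add: calibrating_orbit_def)

lemma continuous_on_calibrated: "continuous_on UNIV V"
  using calibrated by (simp add: calibrated_subaction_def)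

lemma calibrated_funpow_shift_le: "V ((shift ^^ k) z) \<le> V z + birkhoff_sum H k z"
  using birkhoff_sum_telescope[of H k z V] subaction_defect_calibrated_nonneg[OF calibrated]
    sum_nonneg[of "{..<k}" "\<lambda>i. subaction_defect H V ((shift ^^ i) z)"]
  by simp

lemma birkhoff_sum_calibrating_orbit:
  "birkhoff_sum H j (calibrating_orbit H V y j) = V y - V (calibrating_orbit H V y j)"
proof (induction j)
  case (Suc j)
  then show ?case
    using calibrating_orbit_Suc[of y j]
    by (simp add: birkhoff_sum_Suc_left subaction_defect_def)
qed (simp add: calibrating_orbit_def)

end

lemma incseq_tendsto_lim:
  fixes X :: "nat \<Rightarrow> real"
  assumes "incseq X" "bdd_above (range X)"
  shows "X \<longlonglongrightarrow> lim X"
  using LIMSEQ_incseq_SUP[OF assms(2,1)] limI by metis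

definition peierls_approx :: "(sigma \<Rightarrow> real) \<Rightarrow> nat \<Rightarrow> sigma \<Rightarrow> sigma \<Rightarrow> real" where
  "peierls_approx H p x y = lim (\<lambda>n. S_np H n p x y)"

lemma peierls_eq_lim_peierls_approx: "peierls H x y = lim (\<lambda>p. peierls_approx H p x y)"
  by (simp add: peierls_def peierls_approx_def)

lemma S_np_eq_Inf:
  "S_np H n p x y =
     Inf {birkhoff_sum H k z | k z. n \<le> k \<and> agree p z x \<and> agree p ((shift ^^ k) z) y}"
  by (simp add: S_np_def birkhoff_sum_def)

section \<open>Potentials of summable variation\<close>

locale regular_potential =
  fixes H :: "sigma \<Rightarrow> real"
  assumes continuous_H: "continuous_on UNIV H"
    and summable_variation_H: "summable_variation H"
begin

lemma summable_var_tail_terms: "summable (\<lambda>j. var H (j + m + 1))"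
  using summable_variation_H summable_iff_shift[of "var H" "m + 1"]
  by (simp add: summable_variation_def add.assoc)

lemma var_tail_nonneg: "0 \<le> var_tail H m"
  unfolding var_tail_def
  by (rule suminf_nonneg[OF summable_var_tail_terms var_nonneg[OF continuous_H]])

lemma sum_var_le_var_tail: "(\<Sum>j<k. var H (j + m + 1)) \<le> var_tail H m"
  unfolding var_tail_def
  by (rule sum_le_suminf[OF summable_var_tail_terms]) (auto intro: var_nonneg[OF continuous_H])

lemma var_tail_tendsto_0: "var_tail H \<longlonglongrightarrow> 0"
proof -
  have summable: "summable (var H)" using summable_variation_H by (simp add: summable_variation_def)
  have "var_tail H m = suminf (var H) - (\<Sum>i<Suc m. var H i)" for m
    using suminf_split_initial_segment[OF summable, of "Suc m"] by (simp add: var_tail_def)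
  then have "var_tail H = (\<lambda>m. suminf (var H) - (\<Sum>i<Suc m. var H i))" by blast
  moreover have "(\<lambda>m. suminf (var H) - (\<Sum>i<Suc m. var H i)) \<longlonglongrightarrow> suminf (var H) - suminf (var H)"
    by (intro tendsto_diff tendsto_const LIMSEQ_Suc[OF summable_LIMSEQ[OF summable]])
  ultimately show ?thesis by (simp only: diff_self)
qed

text \<open>Bounded distortion: the i-th terms of the two sums differ by at most var H (k - i + m).\<close>

lemma birkhoff_sum_agree_le:
  assumes "agree (k + m) z z'"
  shows "birkhoff_sum H k z' \<le> birkhoff_sum H k z + var_tail H m"
proof -
  have "birkhoff_sum H k z' - birkhoff_sum H k z = (\<Sum>i<k. H ((shift ^^ i) z') - H ((shift ^^ i) z))"
    by (simp add: birkhoff_sum_eq sum_subtractf)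
  also have "\<dots> \<le> (\<Sum>i<k. \<bar>H ((shift ^^ i) z) - H ((shift ^^ i) z')\<bar>)"
    by (intro sum_mono) (simp add: abs_minus_commute)
  also have "\<dots> \<le> (\<Sum>i<k. var H (k - Suc i + m + 1))"
  proof (rule sum_mono)
    fix i assume "i \<in> {..<k}"
    then have "agree (k - Suc i + m + 1) ((shift ^^ i) z) ((shift ^^ i) z')"
      using agree_funpow_shift[OF assms, of i] by (simp add: Suc_diff_Suc)
    then show "\<bar>H ((shift ^^ i) z) - H ((shift ^^ i) z')\<bar> \<le> var H (k - Suc i + m + 1)"
      by (rule abs_diff_le_var[OF continuous_H])
  qed
  also have "\<dots> = (\<Sum>j<k. var H (j + m + 1))"
    using sum.nat_diff_reindex[of "\<lambda>j. var H (j + m + 1)" k] by simp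
  also have "\<dots> \<le> var_tail H m" by (rule sum_var_le_var_tail)
  finally show ?thesis by simp
qed

lemma integrable_H: "invariant_prob M \<Longrightarrow> integrable M H"
  unfolding invariant_prob_def
  using integrable_continuous_sigma[of M H] continuous_H prob_space.axioms(1) by blast

lemma bdd_below_integrals: "bdd_below ((\<lambda>M. integral\<^sup>L M H) ` {M. invariant_prob M})"
proof -
  obtain B where B: "\<And>x. \<bar>H x\<bar> \<le> B" using continuous_on_sigma_bounded[OF continuous_H] by blast
  have "- B \<le> integral\<^sup>L M H" if "invariant_prob M" for M
  proof -
    interpret prob_space M using that by (simp add: invariant_prob_def)
    have "- B \<le> H x" for x using B[of x] by linarith
    then have "AE x in M. - B \<le> H x" by simp
    then show ?thesis by (rule integral_ge_const[OF integrable_H[OF that]])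
  qed
  then show ?thesis by (intro bdd_belowI[where m="- B"]) auto
qed

lemma Hbar_le_integral: "invariant_prob M \<Longrightarrow> Hbar H \<le> integral\<^sup>L M H"
  unfolding Hbar_def by (rule cINF_lower[OF bdd_below_integrals]) auto

lemma integral_eq_Hbar_if_minimizing: "minimizing H M \<Longrightarrow> integral\<^sup>L M H = Hbar H"
  unfolding minimizing_def Hbar_def
  by (intro antisym cINF_greatest cINF_lower[OF bdd_below_integrals]) auto

text \<open>The point whose first k symbols are repeated periodically has a nonnegative sum, because its
  orbit measure is invariant; bounded distortion transfers this to z.\<close>

lemma birkhoff_sum_lower_bound: "- var_tail H 0 \<le> birkhoff_sum H k z"
proof (cases "k = 0")
  case True
  then show ?thesis using var_tail_nonneg by simp
next
  case False
  define w where "w = (\<lambda>j. z (j mod k))"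
  have "agree (k + 0) z w" by (auto simp: agree_def w_def)
  then have "birkhoff_sum H k w \<le> birkhoff_sum H k z + var_tail H 0"
    by (rule birkhoff_sum_agree_le)
  moreover have "Hbar H \<le> (\<Sum>i<k. H ((shift ^^ i) w)) / real k"
    using Hbar_le_integral[OF invariant_prob_periodic_measure] integral_periodic_measure[OF _ continuous_H]
      False by (simp add: w_def)
  then have "0 \<le> birkhoff_sum H k w"
    using False by (simp add: birkhoff_sum_eq field_simps)
  ultimately show ?thesis by linarith
qed

lemma integral_subaction_defect:
  assumes "invariant_prob M" "continuous_on UNIV u"
  shows "integral\<^sup>L M (subaction_defect H u) = integral\<^sup>L M H - Hbar H"
proof -
  have M: "prob_space M" "sets M = sets borel" using assms(1) by (auto simp: invariant_prob_def)
  then have fin: "finite_measure M" by (simp add: prob_space.axioms(1))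
  have "integrable M u" "integrable M (\<lambda>x. u (shift x))" "integrable M (\<lambda>x. Hbar H)"
    using integrable_continuous_sigma[OF fin M(2)] assms(2) continuous_on_compose_shift
      finite_measure.integrable_const[OF fin] by auto
  then show ?thesis
    using integrable_H[OF assms(1)] integral_shift_eq_if_invariant_prob[OF assms]
      prob_space.prob_space[OF M(1)]
    unfolding subaction_defect_def[abs_def] by simp
qed

lemma infimal_subaction_le:
  assumes "(shift ^^ k) z = y"
  shows "infimal_subaction H y \<le> birkhoff_sum H k z"
  unfolding infimal_subaction_def
proof (rule cInf_lower)
  show "birkhoff_sum H k z \<in> {birkhoff_sum H k z | k z. (shift ^^ k) z = y}"
    using assms by blast
  show "bdd_below {birkhoff_sum H k z | k z. (shift ^^ k) z = y}"
    using birkhoff_sum_lower_bound by (intro bdd_belowI[where m="- var_tail H 0"]) auto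
qed

lemma le_infimal_subaction:
  assumes "\<And>k z. (shift ^^ k) z = y \<Longrightarrow> c \<le> birkhoff_sum H k z"
  shows "c \<le> infimal_subaction H y"
  unfolding infimal_subaction_def
proof (rule cInf_greatest)
  have "birkhoff_sum H 0 y \<in> {birkhoff_sum H k z | k z. (shift ^^ k) z = y}"
    by (intro CollectI exI[of _ 0] exI[of _ y]) simp
  then show "{birkhoff_sum H k z | k z. (shift ^^ k) z = y} \<noteq> {}" by blast
qed (use assms in blast)

lemma infimal_subaction_le_0: "infimal_subaction H y \<le> 0"
  using infimal_subaction_le[of 0 y y] by simp

lemma infimal_subaction_ge: "- var_tail H 0 \<le> infimal_subaction H y"
  by (rule le_infimal_subaction) (rule birkhoff_sum_lower_bound)

lemma subaction_defect_infimal_subaction_nonneg: "0 \<le> subaction_defect H (infimal_subaction H) x"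
proof -
  have "infimal_subaction H (shift x) - (H x - Hbar H) \<le> birkhoff_sum H k z"
    if "(shift ^^ k) z = x" for k z
    using infimal_subaction_le[of "Suc k" z "shift x"] that by (simp add: birkhoff_sum_Suc)
  then have "infimal_subaction H (shift x) - (H x - Hbar H) \<le> infimal_subaction H x"
    by (rule le_infimal_subaction)
  then show ?thesis by (simp add: subaction_defect_def)
qed

text \<open>Replacing the tail of an orbit ending at y by y' costs at most the bounded distortion.\<close>

lemma infimal_subaction_agree_le:
  assumes "agree m y y'"
  shows "infimal_subaction H y' \<le> infimal_subaction H y + var_tail H m"
proof -
  have "infimal_subaction H y' - var_tail H m \<le> birkhoff_sum H k z"
    if "(shift ^^ k) z = y" for k z
  proof -
    have "agree (k + m) z (splice k z y')"
      using assms that by (intro agree_splice_if_agree_funpow_shift) simp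
    then have "birkhoff_sum H k (splice k z y') \<le> birkhoff_sum H k z + var_tail H m"
      by (rule birkhoff_sum_agree_le)
    then show ?thesis using infimal_subaction_le[of k "splice k z y'" y'] by simp
  qed
  then have "infimal_subaction H y' - var_tail H m \<le> infimal_subaction H y"
    by (rule le_infimal_subaction)
  then show ?thesis by simp
qed

lemma continuous_infimal_subaction: "continuous_on UNIV (infimal_subaction H)"
proof (rule continuous_on_if_agree_bound[OF _ var_tail_tendsto_0])
  show "\<bar>infimal_subaction H x - infimal_subaction H y\<bar> \<le> var_tail H n" if "agree n x y" for n x y
    using infimal_subaction_agree_le[OF that] infimal_subaction_agree_le[OF agree_sym[OF that]]
    by linarith
qed

lemma subaction_defect_vanishes_on_Mather:
  assumes "x \<in> Mather H"
  shows "subaction_defect H (infimal_subaction H) x = 0"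
proof -
  obtain M where M: "minimizing H M" "x \<in> support M" using assms by (auto simp: Mather_def)
  then have inv: "invariant_prob M" by (simp add: minimizing_def)
  then have "finite_measure M" "sets M = sets borel"
    by (auto simp: invariant_prob_def prob_space.finite_measure)
  moreover have "integral\<^sup>L M (subaction_defect H (infimal_subaction H)) = 0"
    using integral_subaction_defect[OF inv continuous_infimal_subaction]
      integral_eq_Hbar_if_minimizing[OF M(1)] by simp
  ultimately show ?thesis
    using continuous_on_subaction_defect[OF continuous_H continuous_infimal_subaction]
      subaction_defect_infimal_subaction_nonneg M(2) vanishes_on_support_if_integral_0
    by blast
qed

text \<open>Along a Mather orbit the infimal sub-action is calibrated, so the sums telescope.\<close>

lemma bdd_above_birkhoff_sums_Mather:
  assumes "x \<in> Mather H"
  shows "bdd_above (range (\<lambda>m. birkhoff_sum H m x))"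
proof (rule bdd_aboveI2)
  fix m
  have "birkhoff_sum H m x = infimal_subaction H ((shift ^^ m) x) - infimal_subaction H x"
    using birkhoff_sum_telescope[of H m x "infimal_subaction H"]
      subaction_defect_vanishes_on_Mather[OF funpow_shift_mem_Mather[OF assms]]
    by simp
  then show "birkhoff_sum H m x \<le> var_tail H 0"
    using infimal_subaction_le_0[of "(shift ^^ m) x"] infimal_subaction_ge[of x] by linarith
qed

lemma mem_classK_if_agree_le:
  assumes "\<And>m y y'. agree m y y' \<Longrightarrow> V y' \<le> V y + var_tail H m"
  shows "V \<in> classK H"
proof -
  have bound: "\<bar>V y - V y'\<bar> \<le> var_tail H m" if "agree m y y'" for m y y'
    using assms[OF that] assms[OF agree_sym[OF that]] by linarith
  then have "var V n \<le> var_tail H n" for n by (rule var_le)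
  moreover have "continuous_on UNIV V"
    by (rule continuous_on_if_agree_bound[OF bound var_tail_tendsto_0])
  ultimately show ?thesis by (simp add: classK_def var_tail_def)
qed

lemma S_np_le_birkhoff_sum:
  assumes "n \<le> k" "agree p z x" "agree p ((shift ^^ k) z) y"
  shows "S_np H n p x y \<le> birkhoff_sum H k z"
  unfolding S_np_eq_Inf
proof (rule cInf_lower)
  show "birkhoff_sum H k z \<in>
      {birkhoff_sum H k z | k z. n \<le> k \<and> agree p z x \<and> agree p ((shift ^^ k) z) y}"
    using assms by blast
  show "bdd_below {birkhoff_sum H k z | k z. n \<le> k \<and> agree p z x \<and> agree p ((shift ^^ k) z) y}"
    using birkhoff_sum_lower_bound by (intro bdd_belowI[where m="- var_tail H 0"]) auto
qed

lemma le_S_np: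
  assumes "\<And>k z. n \<le> k \<Longrightarrow> agree p z x \<Longrightarrow> agree p ((shift ^^ k) z) y \<Longrightarrow> c \<le> birkhoff_sum H k z"
  shows "c \<le> S_np H n p x y"
  unfolding S_np_eq_Inf
proof (rule cInf_greatest)
  have "birkhoff_sum H (n + p) (splice (n + p) x y) \<in>
      {birkhoff_sum H k z | k z. n \<le> k \<and> agree p z x \<and> agree p ((shift ^^ k) z) y}"
    by (intro CollectI exI[of _ "n + p"] exI[of _ "splice (n + p) x y"]) (simp add: agree_splice)
  then show "{birkhoff_sum H k z | k z. n \<le> k \<and> agree p z x \<and> agree p ((shift ^^ k) z) y} \<noteq> {}"
    by blast
qed (use assms in blast)

lemma S_np_le: "S_np H n p x y \<le> birkhoff_sum H (n + p) x + var_tail H 0"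
proof -
  have "agree (n + p + 0) x (splice (n + p) x y)" by (simp add: agree_sym[OF agree_splice])
  then have "birkhoff_sum H (n + p) (splice (n + p) x y) \<le> birkhoff_sum H (n + p) x + var_tail H 0"
    by (rule birkhoff_sum_agree_le)
  moreover have "S_np H n p x y \<le> birkhoff_sum H (n + p) (splice (n + p) x y)"
    by (rule S_np_le_birkhoff_sum) (simp_all add: agree_splice)
  ultimately show ?thesis by linarith
qed

lemma S_np_mono:
  assumes "n \<le> n'" "p \<le> p'"
  shows "S_np H n p x y \<le> S_np H n' p' x y"
proof (rule le_S_np)
  fix k z assume "n' \<le> k" "agree p' z x" "agree p' ((shift ^^ k) z) y"
  then show "S_np H n p x y \<le> birkhoff_sum H k z"
    using assms by (intro S_np_le_birkhoff_sum) (auto intro: agree_mono)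
qed

text \<open>Redirecting the end of a connecting orbit from y to a nearby y' costs at most the bounded
  distortion.\<close>

lemma S_np_agree_le:
  assumes "m \<le> p" "p \<le> n" "agree m y y'"
  shows "S_np H n p x y' \<le> S_np H n p x y + var_tail H m"
proof -
  have "S_np H n p x y' - var_tail H m \<le> birkhoff_sum H k z"
    if k: "n \<le> k" "agree p z x" "agree p ((shift ^^ k) z) y" for k z
  proof -
    have "agree m ((shift ^^ k) z) y'"
      using agree_trans[OF agree_mono[OF k(3) assms(1)] assms(3)] .
    then have "agree (k + m) z (splice k z y')" by (rule agree_splice_if_agree_funpow_shift)
    then have "birkhoff_sum H k (splice k z y') \<le> birkhoff_sum H k z + var_tail H m"
      by (rule birkhoff_sum_agree_le)
    moreover have "agree p (splice k z y') x"
      using agree_trans[OF agree_splice k(2)] assms(2) k(1) by simp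
    then have "S_np H n p x y' \<le> birkhoff_sum H k (splice k z y')"
      using k(1) by (intro S_np_le_birkhoff_sum) simp_all
    ultimately show ?thesis by linarith
  qed
  then have "S_np H n p x y' - var_tail H m \<le> S_np H n p x y" by (rule le_S_np)
  then show ?thesis by simp
qed

text \<open>An orbit from x to z, one step longer, is an orbit from x to shift z.\<close>

lemma S_np_shift_le: "S_np H n p x (shift z) \<le> S_np H n (Suc p) x z + H z - Hbar H + var H (Suc p)"
proof -
  have "S_np H n p x (shift z) - (H z - Hbar H + var H (Suc p)) \<le> birkhoff_sum H k w"
    if k: "n \<le> k" "agree (Suc p) w x" "agree (Suc p) ((shift ^^ k) w) z" for k w
  proof -
    have "S_np H n p x (shift z) \<le> birkhoff_sum H (Suc k) w"
      using k agree_shift[OF k(3)] by (intro S_np_le_birkhoff_sum) (auto intro: agree_mono)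
    moreover have "\<bar>H ((shift ^^ k) w) - H z\<bar> \<le> var H (Suc p)"
      by (rule abs_diff_le_var[OF continuous_H k(3)])
    ultimately show ?thesis by (simp add: birkhoff_sum_Suc)
  qed
  then have "S_np H n p x (shift z) - (H z - Hbar H + var H (Suc p)) \<le> S_np H n (Suc p) x z"
    by (rule le_S_np)
  then show ?thesis by simp
qed

text \<open>Conversely, an orbit from x to y of length at least n + 1 passes through a preimage of y.\<close>

lemma LaxOleinik_S_np_le:
  "LaxOleinik H (S_np H n p x) y - Hbar H - var H (Suc p) \<le> S_np H (Suc n) p x y"
proof (rule le_S_np)
  fix k w assume k: "Suc n \<le> k" "agree p w x" "agree p ((shift ^^ k) w) y"
  then obtain j where j: "k = Suc j" by (cases k) auto
  define b where "b = (shift ^^ j) w 0"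
  have agree_pre: "agree (Suc p) ((shift ^^ j) w) (prepend b y)"
    using k(3) unfolding agree_def b_def prepend_def j
    by (auto simp: funpow_shift shift_def split: nat.splits)
  have "LaxOleinik H (S_np H n p x) y \<le> S_np H n p x (prepend b y) + H (prepend b y)"
    by (cases b) (simp_all add: LaxOleinik_eq_min)
  moreover have "S_np H n p x (prepend b y) \<le> birkhoff_sum H j w"
    using k j agree_mono[OF agree_pre] by (intro S_np_le_birkhoff_sum) simp_all
  moreover have "\<bar>H ((shift ^^ j) w) - H (prepend b y)\<bar> \<le> var H (Suc p)"
    by (rule abs_diff_le_var[OF continuous_H agree_pre])
  ultimately show "LaxOleinik H (S_np H n p x) y - Hbar H - var H (Suc p) \<le> birkhoff_sum H k w"
    by (simp add: j birkhoff_sum_Suc)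
qed

context
  fixes x :: sigma
  assumes bdd_sums: "bdd_above (range (\<lambda>m. birkhoff_sum H m x))"
begin

lemma S_np_tendsto_peierls_approx: "(\<lambda>n. S_np H n p x y) \<longlonglongrightarrow> peierls_approx H p x y"
proof -
  obtain C where C: "\<And>m. birkhoff_sum H m x \<le> C" using bdd_sums by (auto simp: bdd_above_def)
  have "incseq (\<lambda>n. S_np H n p x y)" by (intro monoI S_np_mono) simp_all
  moreover have "bdd_above (range (\<lambda>n. S_np H n p x y))"
    using order_trans[OF S_np_le add_right_mono[OF C]] by (intro bdd_aboveI2) blast
  ultimately show ?thesis unfolding peierls_approx_def by (rule incseq_tendsto_lim)
qed

lemma S_np_le_peierls_approx: "S_np H n p x y \<le> peierls_approx H p x y"
  by (rule incseq_le[OF _ S_np_tendsto_peierls_approx]) (intro monoI S_np_mono, simp_all)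

lemma peierls_approx_le_if:
  assumes "\<And>n. N \<le> n \<Longrightarrow> S_np H n p x y \<le> c"
  shows "peierls_approx H p x y \<le> c"
  using assms by (intro LIMSEQ_le_const2[OF S_np_tendsto_peierls_approx]) blast

lemma peierls_approx_tendsto_peierls: "(\<lambda>p. peierls_approx H p x y) \<longlonglongrightarrow> peierls H x y"
proof -
  obtain C where C: "\<And>m. birkhoff_sum H m x \<le> C" using bdd_sums by (auto simp: bdd_above_def)
  have mono: "incseq (\<lambda>p. peierls_approx H p x y)"
  proof (rule monoI)
    fix p p' :: nat assume "p \<le> p'"
    then show "peierls_approx H p x y \<le> peierls_approx H p' x y"
      by (intro LIMSEQ_le[OF S_np_tendsto_peierls_approx S_np_tendsto_peierls_approx])
        (auto intro: S_np_mono)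
  qed
  have "peierls_approx H p x y \<le> C + var_tail H 0" for p
    using order_trans[OF S_np_le add_right_mono[OF C]] by (intro peierls_approx_le_if) blast
  then have "bdd_above (range (\<lambda>p. peierls_approx H p x y))" by (intro bdd_aboveI2)
  with mono show ?thesis unfolding peierls_eq_lim_peierls_approx by (rule incseq_tendsto_lim)
qed

lemma peierls_approx_le_peierls: "peierls_approx H p x y \<le> peierls H x y"
  using incseq_le[OF _ peierls_approx_tendsto_peierls]
    LIMSEQ_le[OF S_np_tendsto_peierls_approx S_np_tendsto_peierls_approx]
  by (metis (no_types, lifting) S_np_mono le_refl monoI)

lemma S_np_le_peierls: "S_np H n p x y \<le> peierls H x y"
  using S_np_le_peierls_approx peierls_approx_le_peierls by (rule order_trans)

lemma peierls_le_if:
  assumes "\<And>p. P \<le> p \<Longrightarrow> peierls_approx H p x y \<le> c + e p" and "e \<longlonglongrightarrow> 0"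
  shows "peierls H x y \<le> c"
proof -
  have "(\<lambda>p. c + e p) \<longlonglongrightarrow> c + 0" by (intro tendsto_intros assms(2))
  then show ?thesis
    using assms(1) by (intro LIMSEQ_le[OF peierls_approx_tendsto_peierls]) auto
qed

lemma le_peierls_if:
  assumes "\<And>p. c - e p \<le> peierls_approx H p x y" and "e \<longlonglongrightarrow> 0"
  shows "c \<le> peierls H x y"
proof -
  have "(\<lambda>p. c - e p) \<longlonglongrightarrow> c - 0" by (intro tendsto_intros assms(2))
  then show ?thesis
    using assms(1) by (intro LIMSEQ_le[OF _ peierls_approx_tendsto_peierls]) auto
qed

lemma peierls_agree_le:
  assumes "agree m y y'"
  shows "peierls H x y' \<le> peierls H x y + var_tail H m"
proof (rule peierls_le_if[where P=m and e="\<lambda>_. 0"])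
  fix p assume "m \<le> p"
  have "S_np H n p x y' \<le> peierls H x y + var_tail H m" if "p \<le> n" for n
    using S_np_agree_le[OF \<open>m \<le> p\<close> that assms, of x] S_np_le_peierls[of n p y] by linarith
  then have "peierls_approx H p x y' \<le> peierls H x y + var_tail H m"
    by (rule peierls_approx_le_if)
  then show "peierls_approx H p x y' \<le> peierls H x y + var_tail H m + 0" by simp
qed simp

lemma peierls_mem_classK: "peierls H x \<in> classK H"
  by (rule mem_classK_if_agree_le) (rule peierls_agree_le)

lemma peierls_shift_le: "peierls H x (shift z) \<le> peierls H x z + H z - Hbar H"
proof (rule peierls_le_if[where P=0 and e="\<lambda>p. var H (Suc p)"])
  fix p
  have "S_np H n p x (shift z) \<le> peierls H x z + H z - Hbar H + var H (Suc p)" for n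
    using S_np_shift_le[of n p x z] S_np_le_peierls[of n "Suc p" z] by linarith
  then show "peierls_approx H p x (shift z) \<le> peierls H x z + H z - Hbar H + var H (Suc p)"
    by (rule peierls_approx_le_if)
qed (rule LIMSEQ_Suc[OF var_tendsto_0[OF continuous_H]])

lemma LaxOleinik_peierls_le: "LaxOleinik H (peierls H x) y \<le> peierls H x y + Hbar H"
proof -
  define L where "L p = LaxOleinik H (peierls_approx H p x) y" for p
  have L_le: "L p - Hbar H - var H (Suc p) \<le> peierls_approx H p x y" for p
  proof (rule LIMSEQ_le)
    show "(\<lambda>n. LaxOleinik H (S_np H n p x) y - Hbar H - var H (Suc p)) \<longlonglongrightarrow>
        L p - Hbar H - var H (Suc p)"
      unfolding L_def LaxOleinik_eq_min by (intro tendsto_intros S_np_tendsto_peierls_approx)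
    show "(\<lambda>n. S_np H (Suc n) p x y) \<longlonglongrightarrow> peierls_approx H p x y"
      by (rule LIMSEQ_Suc[OF S_np_tendsto_peierls_approx])
  qed (use LaxOleinik_S_np_le in blast)
  have "LaxOleinik H (peierls H x) y - Hbar H - 0 \<le> peierls H x y"
  proof (rule LIMSEQ_le[OF _ peierls_approx_tendsto_peierls])
    have "(\<lambda>p. var H (Suc p)) \<longlonglongrightarrow> 0" by (rule LIMSEQ_Suc[OF var_tendsto_0[OF continuous_H]])
    then show "(\<lambda>p. L p - Hbar H - var H (Suc p)) \<longlonglongrightarrow> LaxOleinik H (peierls H x) y - Hbar H - 0"
      unfolding L_def LaxOleinik_eq_min by (intro tendsto_intros peierls_approx_tendsto_peierls)
  qed (use L_le in auto)
  then show ?thesis by simp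
qed

lemma calibrated_subaction_peierls: "calibrated_subaction H (peierls H x)"
  using peierls_mem_classK peierls_shift_le LaxOleinik_peierls_le
  by (intro calibrated_subactionI) (simp_all add: classK_def)

end

context
  fixes V :: "sigma \<Rightarrow> real"
  assumes calibrated: "calibrated_subaction H V"
begin

text \<open>Go back j steps from y along the calibrating orbit and return to y' instead of y: this
  costs the bounded distortion, and the error var V j vanishes as j grows.\<close>

lemma calibrated_agree_le:
  assumes "agree m y y'"
  shows "V y' \<le> V y + var_tail H m"
proof -
  have "V y' \<le> V y + var_tail H m + var V j" for j
  proof -
    define z where "z = calibrating_orbit H V y j"
    define z' where "z' = splice j z y'"
    have "agree (j + m) z z'"
      unfolding z'_def using assms funpow_shift_calibrating_orbit[OF calibrated]
      by (intro agree_splice_if_agree_funpow_shift) (simp add: z_def)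
    then have "birkhoff_sum H j z' \<le> birkhoff_sum H j z + var_tail H m"
      by (rule birkhoff_sum_agree_le)
    moreover have "V y' \<le> V z' + birkhoff_sum H j z'"
      using calibrated_funpow_shift_le[OF calibrated, of j z'] by (simp add: z'_def)
    moreover have "birkhoff_sum H j z = V y - V z"
      unfolding z_def by (rule birkhoff_sum_calibrating_orbit[OF calibrated])
    moreover have "\<bar>V z' - V z\<bar> \<le> var V j"
      unfolding z'_def by (intro abs_diff_le_var continuous_on_calibrated[OF calibrated] agree_splice) simp
    ultimately show ?thesis by linarith
  qed
  moreover have "(\<lambda>j. V y + var_tail H m + var V j) \<longlonglongrightarrow> V y + var_tail H m + 0"
    by (intro tendsto_intros var_tendsto_0 continuous_on_calibrated[OF calibrated])
  ultimately show ?thesis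
    by (intro LIMSEQ_le[OF tendsto_const[of "V y'"]]) auto
qed

lemma calibrated_mem_classK: "V \<in> classK H"
  by (rule mem_classK_if_agree_le) (rule calibrated_agree_le)

lemma calibrated_le_peierls:
  assumes bdd: "bdd_above (range (\<lambda>m. birkhoff_sum H m x))"
  shows "V y \<le> V x + peierls H x y"
proof -
  have "V y - V x - 2 * var V p \<le> peierls_approx H p x y" for p
  proof -
    have "V y - V x - 2 * var V p \<le> S_np H 0 p x y"
    proof (rule le_S_np)
      fix k z assume k: "0 \<le> k" "agree p z x" "agree p ((shift ^^ k) z) y"
      have "\<bar>V ((shift ^^ k) z) - V y\<bar> \<le> var V p" "\<bar>V z - V x\<bar> \<le> var V p"
        using k by (simp_all add: abs_diff_le_var continuous_on_calibrated[OF calibrated])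
      then show "V y - V x - 2 * var V p \<le> birkhoff_sum H k z"
        using calibrated_funpow_shift_le[OF calibrated, of k z] by linarith
    qed
    then show ?thesis using S_np_le_peierls_approx[OF bdd, of 0 p y] by linarith
  qed
  then have "V y - V x \<le> peierls H x y"
    by (rule le_peierls_if[OF bdd])
      (intro tendsto_mult_right_zero var_tendsto_0 continuous_on_calibrated[OF calibrated])
  then show ?thesis by simp
qed

lemma peierls_le_calibrated_if_recurrent:
  assumes bdd: "bdd_above (range (\<lambda>m. birkhoff_sum H m x))"
    and recurrent: "\<And>p N. \<exists>j\<ge>N. agree p (calibrating_orbit H V y j) x"
  shows "V x + peierls H x y \<le> V y"
proof -
  have "S_np H n p x y \<le> V y - V x + var V p" for n p
  proof -
    obtain j where j: "n \<le> j" "agree p (calibrating_orbit H V y j) x" using recurrent by blast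
    have "S_np H n p x y \<le> birkhoff_sum H j (calibrating_orbit H V y j)"
      using j funpow_shift_calibrating_orbit[OF calibrated] by (intro S_np_le_birkhoff_sum) simp_all
    also have "\<dots> = V y - V (calibrating_orbit H V y j)"
      by (rule birkhoff_sum_calibrating_orbit[OF calibrated])
    also have "\<dots> \<le> V y - V x + var V p"
      using abs_diff_le_var[OF continuous_on_calibrated[OF calibrated] j(2)] by linarith
    finally show ?thesis .
  qed
  then have "peierls_approx H p x y \<le> V y - V x + var V p" for p
    by (intro peierls_approx_le_if[OF bdd])
  then have "peierls H x y \<le> V y - V x"
    by (rule peierls_le_if[OF bdd]) (rule var_tendsto_0[OF continuous_on_calibrated[OF calibrated]])
  then show ?thesis by simp
qed

text \<open>The empirical measures along the calibrating orbit accumulate on an invariant measure that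
  integrates the vanishing defect of V, hence is minimizing; its support points are visited
  infinitely often.\<close>

lemma exists_recurrent_Mather_point:
  obtains x where "x \<in> Mather H" "\<And>p N. \<exists>j\<ge>N. agree p (calibrating_orbit H V y j) x"
proof -
  define w where "w j = calibrating_orbit H V y (Suc j)" for j
  have backward: "shift (w (Suc j)) = w j" for j
    unfolding w_def by (rule calibrating_orbit_Suc(1)[OF calibrated])
  obtain r M where M: "strict_mono r" "prob_space M" "sets M = sets borel" "empirical_limit w r M"
    by (rule empirical_limit_exists)
  have inv: "invariant_prob M" by (rule invariant_prob_if_empirical_limit[OF M(2-4,1) backward])
  have defect_cont: "continuous_on UNIV (subaction_defect H V)"
    by (rule continuous_on_subaction_defect[OF continuous_H continuous_on_calibrated[OF calibrated]])
  have "(\<lambda>i. (\<Sum>j<Suc (r i). subaction_defect H V (w j)) / real (Suc (r i)))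
      \<longlonglongrightarrow> integral\<^sup>L M (subaction_defect H V)"
    using empirical_limitD[OF M(4) defect_cont bounded_range_continuous_on_sigma[OF defect_cont]] .
  moreover have "subaction_defect H V (w j) = 0" for j
    unfolding w_def by (rule calibrating_orbit_Suc(2)[OF calibrated])
  ultimately have "integral\<^sup>L M (subaction_defect H V) = 0" by (simp add: LIMSEQ_const_iff)
  then have "integral\<^sup>L M H = Hbar H"
    using integral_subaction_defect[OF inv continuous_on_calibrated[OF calibrated]] by simp
  then have "minimizing H M" using inv Hbar_le_integral by (simp add: minimizing_def)
  obtain x where x: "x \<in> support M" using support_nonempty[OF M(2,3)] by blast
  have "\<exists>j\<ge>N. agree p (calibrating_orbit H V y j) x" for p N
  proof -
    obtain j where "N \<le> j" "agree p (w j) x" using recurrent_if_mem_support[OF M(2-4,1) x] by blast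
    then show ?thesis unfolding w_def by (intro exI[of _ "Suc j"]) simp
  qed
  moreover have "x \<in> Mather H" using \<open>minimizing H M\<close> x by (auto simp: Mather_def)
  ultimately show thesis using that by blast
qed

lemma calibrated_eq_min_peierls:
  "(\<exists>x \<in> Mather H. V y = V x + peierls H x y) \<and> (\<forall>x \<in> Mather H. V y \<le> V x + peierls H x y)"
proof
  show "\<forall>x \<in> Mather H. V y \<le> V x + peierls H x y"
    using calibrated_le_peierls[OF bdd_above_birkhoff_sums_Mather] by blast
  obtain x where x: "x \<in> Mather H" "\<And>p N. \<exists>j\<ge>N. agree p (calibrating_orbit H V y j) x"
    using exists_recurrent_Mather_point by blast
  then show "\<exists>x \<in> Mather H. V y = V x + peierls H x y"
    using calibrated_le_peierls[OF bdd_above_birkhoff_sums_Mather[OF x(1)], of y]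
      peierls_le_calibrated_if_recurrent[OF bdd_above_birkhoff_sums_Mather[OF x(1)] x(2)]
    by force
qed

end

end

theorem proposition2p5:
  fixes H :: "sigma \<Rightarrow> real"
  assumes "continuous_on UNIV H"
    and "summable_variation H"
  shows "(\<forall>x \<in> Mather H. peierls H x \<in> classK H \<and> calibrated_subaction H (peierls H x)) \<and>
         (\<forall>V. continuous_on UNIV V \<and> calibrated_subaction H V \<longrightarrow>
           V \<in> classK H \<and>
           (\<forall>y. (\<exists>x \<in> Mather H. V y = V x + peierls H x y) \<and>
                (\<forall>x \<in> Mather H. V y \<le> V x + peierls H x y)))"
proof -
  interpret regular_potential H using assms by unfold_locales
  show ?thesis
    using peierls_mem_classK[OF bdd_above_birkhoff_sums_Mather]
      calibrated_subaction_peierls[OF bdd_above_birkhoff_sums_Mather]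
      calibrated_mem_classK calibrated_eq_min_peierls
    by blast
qed

end
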